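(* There exist positive integers $m_0,t,L,q_0$, depending only on $k$, with the following property. Let $\nu=(\nu_N)$ be an $(m_0,t,L,q_0)$-pseudo-random weight. Then there is a function $N\mapsto\varepsilon(N)\ge0$ on primes with $\varepsilon(N)\to0$ as $N\to\infty$ (depending only on $k$ and $\nu$) such that for every prime $N$ and all functions $f_0,\dots,f_k:\mathbb{Z}_N\to\mathbb{R}$ with $|f_j(x)|\le1+\nu_N(x)$ for all $x\in\mathbb{Z}_N$ and all $0\le j\le k$, $$\Bigl|\mathbb{E}\Bigl(\prod_{j=0}^kf_j(x+jt)\,\Big|\,x,t\in\mathbb{Z}_N\Bigr)\Bigr|\le2^{k+1}\min_{0\le j\le k}\|f_j\|_{U^k}+\varepsilon(N).$$
   Context: Let $k\ge 2$ be a fixed integer. For a prime $N$, $\mathbb{Z}_N=\mathbb{Z}/N\mathbb{Z}$. For a finite set $A$ and $g:A\to\mathbb{R}$, $\mathbb{E}(g\mid A)=\frac{1}{|A|}\sum_{a\in A}g(a)$. For $\boldsymbol\omega\in\{0,1\}^d$ and $\mathbf t\in\mathbb{Z}_N^d$, $\boldsymbol\omega\cdot\mathbf t=\sum_i\omega_it_i$; the Gowers norm is $\|f\|_{U^d}=\Bigl(\mathbb{E}\bigl(\prod_{\boldsymbol\omega\in\{0,1\}^d}f(x+\boldsymbol\omega\cdot\mathbf t)\mid x\in\mathbb{Z}_N,\mathbf t\in\mathbb{Z}_N^d\bigr)\Bigr)^{1/2^d}$. Let $m_0,t,L,q_0$ be positive integers. An $(m_0,t,L,q_0)$-pseudo-random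 weight is a family $\nu=(\nu_N)_{N\text{ prime}}$ of functions $\nu_N:\mathbb{Z}_N\to[0,\infty)$ satisfying: (Linear forms condition) $\sup\bigl|\mathbb{E}\bigl(\prod_{i=1}^m\nu_N(\psi_i(\mathbf{x}))\mid \mathbf{x}\in\mathbb{Z}_N^t\bigr)-1\bigr|\to 0$ as $N\to\infty$, where the supremum is over all $m\le m_0$ and all maps $\psi_1,\dots,\psi_m:\mathbb{Z}_N^t\to\mathbb{Z}_N$ of the form $\psi_i(\mathbf{x})=b_i+\sum_{j=1}^tL_{i,j}x_j$ with $b_i\in\mathbb{Z}$ arbitrary, $L_{i,j}\in\mathbb{Z}$, $|L_{i,j}|\le L$, each vector $(L_{i,j})_{1\le j\le t}\in\mathbb{Z}^t$ nonzero, and no two of these vectors collinear; (Correlation condition) there exist functions $\tau_N:\mathbb{Z}_N\to[0,\infty)$ with $\sup_N\mathbb{E}(\tau_N^p\mid\mathbb{Z}_N)<\infty$ for every integer $p\ge1$, such that for every prime $N$, every integer $q$ with $2\le q\le q_0$ and all $h_1,\dots,h_q\in\mathbb{Z}_N$ (not necessarily distinct), $\mathbb{E}\bigl(\nu_N(x+h_1)\cdots\nu_N(x+h_q)\mid x\in\mathbb{Z}_N\bigr)\le\sum_{1\le i<j\le q}\tau_N(h_i-h_j)$. *)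

theory Defs
  imports Complex_Main "HOL-Library.FuncSet" "HOL-Computational_Algebra.Primes"
begin

text \<open>Z_N is represented by the integers {0..<N}; a function
Z_N -> R is a function int => real of which only the values on {0..<N} matter,
and all arguments are reduced mod N. A family (nu_N) indexed by primes N is
a function nat => int => real. Vectors in Z_N^t are functions nat => int on
{0..<t} with values in {0..<N} (PiE). A vector omega in {0,1}^d is encoded
by the set S = {i. omega_i = 1} of {0..<d}.\<close>

definition ZN :: "nat \<Rightarrow> int set" where
  "ZN N = {0..<int N}"

definition ZN_vecs :: "nat \<Rightarrow> nat \<Rightarrow> (nat \<Rightarrow> int) set" where
  "ZN_vecs N t = PiE {0..<t} (\<lambda>_. ZN N)"

definition gowers_norm :: "nat \<Rightarrow> nat \<Rightarrow> (int \<Rightarrow> real) \<Rightarrow> real" where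
  "gowers_norm N d f =
     root (2 ^ d)
      ((\<Sum>x\<in>ZN N. \<Sum>t\<in>ZN_vecs N d.
          \<Prod>S\<in>Pow {0..<d}. f ((x + (\<Sum>i\<in>S. t i)) mod int N))
       / real (card (ZN N \<times> ZN_vecs N d)))"

text \<open>Two vectors of Z^t are collinear (only used for nonzero vectors).\<close>
definition collinear_int :: "nat \<Rightarrow> (nat \<Rightarrow> int) \<Rightarrow> (nat \<Rightarrow> int) \<Rightarrow> bool" where
  "collinear_int t u v \<longleftrightarrow>
     (\<exists>c::real. \<forall>j<t. real_of_int (u j) = c * real_of_int (v j)) \<or>
     (\<exists>c::real. \<forall>j<t. real_of_int (v j) = c * real_of_int (u j))"

definition linear_forms_condition ::
  "nat \<Rightarrow> nat \<Rightarrow> nat \<Rightarrow> (nat \<Rightarrow> int \<Rightarrow> real) \<Rightarrow> bool" where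
  "linear_forms_condition m0 t L nu \<longleftrightarrow>
     (\<forall>e>0. \<exists>N0. \<forall>N. prime N \<and> N \<ge> N0 \<longrightarrow>
        (\<forall>m b Lm. m \<le> m0 \<and>
            (\<forall>i<m. \<forall>j<t. \<bar>Lm i j\<bar> \<le> int L) \<and>
            (\<forall>i<m. \<exists>j<t. Lm i j \<noteq> 0) \<and>
            (\<forall>i<m. \<forall>i'<m. i \<noteq> i' \<longrightarrow> \<not> collinear_int t (Lm i) (Lm i'))
          \<longrightarrow>
            \<bar>(\<Sum>x\<in>ZN_vecs N t.
                 \<Prod>i<m. nu N ((b i + (\<Sum>j<t. Lm i j * x j)) mod int N))
               / real (card (ZN_vecs N t)) - 1\<bar> \<le> e))"

definition correlation_condition ::
  "nat \<Rightarrow> (nat \<Rightarrow> int \<Rightarrow> real) \<Rightarrow> bool" where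
  "correlation_condition q0 nu \<longleftrightarrow>
     (\<exists>tau :: nat \<Rightarrow> int \<Rightarrow> real.
        (\<forall>N x. prime N \<longrightarrow> x \<in> ZN N \<longrightarrow> tau N x \<ge> 0) \<and>
        (\<forall>p::nat. p \<ge> 1 \<longrightarrow> (\<exists>B. \<forall>N. prime N \<longrightarrow>
            (\<Sum>x\<in>ZN N. tau N x ^ p) / real (card (ZN N)) \<le> B)) \<and>
        (\<forall>N q h. prime N \<and> 2 \<le> q \<and> q \<le> q0 \<longrightarrow>
            (\<Sum>x\<in>ZN N. \<Prod>i<q. nu N ((x + h i) mod int N)) / real (card (ZN N))
              \<le> (\<Sum>j<q. \<Sum>i<j. tau N ((h i - h j) mod int N))))"

definition pseudo_random_weight ::
  "nat \<Rightarrow> nat \<Rightarrow> nat \<Rightarrow> nat \<Rightarrow> (nat \<Rightarrow> int \<Rightarrow> real) \<Rightarrow> bool" where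
  "pseudo_random_weight m0 t L q0 nu \<longleftrightarrow>
     (\<forall>N x. prime N \<longrightarrow> x \<in> ZN N \<longrightarrow> nu N x \<ge> 0) \<and>
     linear_forms_condition m0 t L nu \<and>
     correlation_condition q0 nu"

end

theory Submission
  imports Defs "HOL-Analysis.Convex" "HOL-Combinatorics.Transposition"
begin

text \<open>The substitution \<open>x = \<Sum>l. skip l * y l\<close>, \<open>s = - (\<Sum>l. y l)\<close>, where \<open>skip\<close> enumerates
  the indices \<open>j \<noteq> a\<close> for an \<open>a\<close> minimising \<open>gowers_norm N k (f a)\<close>, turns
  \<open>f j (x + j s)\<close> into \<open>f j\<close> evaluated at a linear form in
  \<open>y \<in> \<int>\<^sub>N\<^sup>k\<close> that does not involve \<open>y i\<close> for \<open>j = skip i\<close>, while \<open>f a\<close> sees all of \<open>y\<close>.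
  Cauchy--Schwarz in each \<open>y i\<close> in turn removes \<open>f (skip i)\<close> at the cost of its majorant
  \<open>1 + \<nu>\<close> and doubles the remaining factors over a cube. After \<open>k\<close> steps the \<open>2\<^sup>k\<close>-th power
  of the average is bounded by the Gowers box of \<open>f a\<close> weighted by a product of values of
  \<open>\<nu>\<close> at linear forms, and one more Cauchy--Schwarz together with the linear forms
  condition shows that the weight may be replaced by \<open>1\<close> up to an error that vanishes as
  \<open>N \<rightarrow> \<infinity>\<close>. The constant \<open>2 ^ (k + 1)\<close> comes from applying all this to \<open>f j / 2\<close>, majorised by
  \<open>(1 + \<nu>) / 2\<close>.\<close>

section \<open>Averages over $\mathbb{Z}_N^t$\<close>

lemma finite_ZN [simp]: "finite (ZN N)"
  by (simp add: ZN_def)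

lemma card_ZN [simp]: "card (ZN N) = N"
  by (simp add: ZN_def)

lemma finite_ZN_vecs [simp]: "finite (ZN_vecs N t)"
  unfolding ZN_vecs_def by (intro finite_PiE) auto

lemma card_ZN_vecs [simp]: "card (ZN_vecs N t) = N ^ t"
  unfolding ZN_vecs_def by (simp add: card_PiE)

lemma mod_in_ZN: "N > 0 \<Longrightarrow> z mod int N \<in> ZN N"
  by (simp add: ZN_def)

lemma mod_eq_self_ZN: "z \<in> ZN N \<Longrightarrow> z mod int N = z"
  by (simp add: ZN_def)

lemma ZN_vecs_memD: "x \<in> ZN_vecs N t \<Longrightarrow> l < t \<Longrightarrow> x l \<in> ZN N"
  by (auto simp: ZN_vecs_def PiE_iff)

lemma ZN_eq_of_dvd: "int N dvd p - q \<Longrightarrow> p \<in> ZN N \<Longrightarrow> q \<in> ZN N \<Longrightarrow> p = q"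
  by (metis mod_eq_self_ZN mod_eq_dvd_iff)

lemma ZN_add_mod_cancel:
  "(x + c) mod int N = (y + c) mod int N \<Longrightarrow> x \<in> ZN N \<Longrightarrow> y \<in> ZN N \<Longrightarrow> x = y"
  by (intro ZN_eq_of_dvd) (auto simp: mod_eq_dvd_iff)

lemma ZN_eq_of_dvd_mult:
  assumes "prime N" "\<not> int N dvd d" "int N dvd d * (p - q)" "p \<in> ZN N" "q \<in> ZN N"
  shows "p = q"
proof (rule ZN_eq_of_dvd)
  have "prime (int N)" using assms(1) by simp
  then show "int N dvd p - q" using assms(2,3) prime_dvd_mult_iff by blast
qed (use assms in auto)

lemma prime_dvd_pair:
  fixes p c0 c1 u v :: int
  assumes "prime p" "\<not> p dvd (c0 - c1)" "p dvd c0 * u + c1 * v" "p dvd u + v"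
  shows "p dvd u" "p dvd v"
proof -
  have "p dvd (c0 * u + c1 * v) - c1 * (u + v)" using assms(3,4) by (intro dvd_diff) auto
  then have "p dvd (c0 - c1) * u" by (simp add: algebra_simps)
  then show "p dvd u" using assms(1,2) prime_dvd_mult_iff by blast
  then show "p dvd v" using assms(4) by (metis add_diff_cancel_left' dvd_diff)
qed

lemma sum_lessThan_add: "(\<Sum>p<m + n. F p) = (\<Sum>p<m. F p) + (\<Sum>l<n. F (m + l))" for m n :: nat
  by (induction n) (auto simp: add.commute add.left_commute)

lemma sum_mult_mod_mod: "(\<Sum>l\<in>A. (e l::int) * (z l mod m)) mod m = (\<Sum>l\<in>A. e l * z l) mod m"
proof -
  have "(\<Sum>l\<in>A. e l * (z l mod m)) mod m = (\<Sum>l\<in>A. (e l * (z l mod m)) mod m) mod m"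
    by (simp add: mod_sum_eq)
  also have "\<dots> = (\<Sum>l\<in>A. (e l * z l) mod m) mod m" by (simp add: mod_mult_right_eq)
  also have "\<dots> = (\<Sum>l\<in>A. e l * z l) mod m" by (simp add: mod_sum_eq)
  finally show ?thesis .
qed

lemma mod_add_sum_mod: "((A mod m) + (\<Sum>l\<in>S. f l mod m)) mod m = (A + (\<Sum>l\<in>S. f l)) mod (m::int)"
proof -
  have "((A mod m) + (\<Sum>l\<in>S. f l mod m)) mod m = (A + (\<Sum>l\<in>S. f l mod m)) mod m"
    by (rule mod_add_left_eq)
  also have "\<dots> = (A + (\<Sum>l\<in>S. f l mod m) mod m) mod m" by (rule mod_add_right_eq[symmetric])
  also have "(\<Sum>l\<in>S. f l mod m) mod m = (\<Sum>l\<in>S. f l) mod m" by (rule mod_sum_eq)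
  also have "(A + (\<Sum>l\<in>S. f l) mod m) mod m = (A + (\<Sum>l\<in>S. f l)) mod m" by (rule mod_add_right_eq)
  finally show ?thesis .
qed

lemma override_on_in_ZN_vecs:
  "x \<in> ZN_vecs N t \<Longrightarrow> y \<in> ZN_vecs N t \<Longrightarrow> override_on x y R \<in> ZN_vecs N t"
  unfolding ZN_vecs_def override_on_def PiE_def Pi_def extensional_def by auto

definition avg_vecs :: "nat \<Rightarrow> nat \<Rightarrow> ((nat \<Rightarrow> int) \<Rightarrow> real) \<Rightarrow> real" where
  "avg_vecs N t H = (\<Sum>x\<in>ZN_vecs N t. H x) / real (N ^ t)"

lemma avg_vecs_add: "avg_vecs N t (\<lambda>x. f x + h x) = avg_vecs N t f + avg_vecs N t h"
  unfolding avg_vecs_def by (simp add: sum.distrib add_divide_distrib)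

lemma avg_vecs_diff: "avg_vecs N t (\<lambda>x. f x - h x) = avg_vecs N t f - avg_vecs N t h"
  unfolding avg_vecs_def by (simp add: sum_subtractf diff_divide_distrib)

lemma avg_vecs_cmult: "avg_vecs N t (\<lambda>x. c * f x) = c * avg_vecs N t f"
  unfolding avg_vecs_def by (simp add: sum_distrib_left)

lemma avg_vecs_multc: "avg_vecs N t (\<lambda>x. f x * c) = avg_vecs N t f * c"
  unfolding avg_vecs_def by (simp add: sum_distrib_right)

lemma avg_vecs_sum:
  "finite S \<Longrightarrow> avg_vecs N t (\<lambda>x. \<Sum>s\<in>S. f s x) = (\<Sum>s\<in>S. avg_vecs N t (f s))"
  unfolding avg_vecs_def by (simp add: sum.swap[of _ S] sum_divide_distrib)

lemma avg_vecs_cong: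
  "(\<And>x. x \<in> ZN_vecs N t \<Longrightarrow> f x = h x) \<Longrightarrow> avg_vecs N t f = avg_vecs N t h"
  unfolding avg_vecs_def by (metis (no_types, lifting) sum.cong)

lemma avg_vecs_mono:
  "(\<And>x. x \<in> ZN_vecs N t \<Longrightarrow> f x \<le> h x) \<Longrightarrow> avg_vecs N t f \<le> avg_vecs N t h"
  unfolding avg_vecs_def by (intro divide_right_mono sum_mono) auto

lemma avg_vecs_nonneg: "(\<And>x. x \<in> ZN_vecs N t \<Longrightarrow> 0 \<le> f x) \<Longrightarrow> 0 \<le> avg_vecs N t f"
  unfolding avg_vecs_def by (intro divide_nonneg_nonneg sum_nonneg) auto

lemma avg_vecs_reindex:
  assumes "\<And>x. x \<in> ZN_vecs N t \<Longrightarrow> \<tau> x \<in> ZN_vecs N t" and "inj_on \<tau> (ZN_vecs N t)"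
  shows "avg_vecs N t (\<lambda>x. H (\<tau> x)) = avg_vecs N t H"
proof -
  have "\<tau> ` ZN_vecs N t = ZN_vecs N t"
    using assms by (intro endo_inj_surj) auto
  then show ?thesis
    unfolding avg_vecs_def using sum.reindex[OF assms(2), of H] by simp
qed

text \<open>The map \<open>(x, y) \<mapsto> (override_on x y R, override_on y x R)\<close> is an involution of
  \<open>ZN_vecs N t \<times> ZN_vecs N t\<close>.\<close>

lemma avg_vecs_override:
  "avg_vecs N t (\<lambda>x. avg_vecs N t (\<lambda>y. \<Phi> (override_on x y R))) = avg_vecs N t \<Phi>"
proof -
  let ?V = "ZN_vecs N t"
  define sw where "sw = (\<lambda>(x::nat\<Rightarrow>int, y::nat\<Rightarrow>int). (override_on x y R, override_on y x R))"
  have sw_inv: "sw (sw q) = q" for q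
    by (cases q) (auto simp: sw_def override_on_def fun_eq_iff)
  have "bij_betw sw (?V \<times> ?V) (?V \<times> ?V)"
    by (rule bij_betw_byWitness[where f'=sw])
      (use sw_inv in \<open>auto simp: sw_def override_on_in_ZN_vecs\<close>)
  note swap_invariant = sum.reindex_bij_betw[OF this, of "\<lambda>q. \<Phi> (fst q)"]
  have "(\<Sum>x\<in>?V. \<Sum>y\<in>?V. \<Phi> (override_on x y R)) = (\<Sum>q\<in>?V \<times> ?V. \<Phi> (fst (sw q)))"
    by (simp add: sum.cartesian_product sw_def case_prod_beta)
  also have "\<dots> = (\<Sum>q\<in>?V \<times> ?V. \<Phi> (fst q))"
    by (rule swap_invariant)
  also have "\<dots> = (\<Sum>x\<in>?V. \<Sum>y\<in>?V. \<Phi> x)"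
    by (simp only: sum.cartesian_product split_def)
  also have "\<dots> = real (N ^ t) * (\<Sum>x\<in>?V. \<Phi> x)"
    by (simp add: sum_distrib_left del: of_nat_power)
  finally have "(\<Sum>x\<in>?V. \<Sum>y\<in>?V. \<Phi> (override_on x y R)) = real (N ^ t) * (\<Sum>x\<in>?V. \<Phi> x)" .
  then show ?thesis
    unfolding avg_vecs_def by (simp add: sum_divide_distrib[symmetric] del: of_nat_power)
qed

lemma avg_vecs_permute_overridden:
  assumes R: "R \<subseteq> {..<t}" and \<pi>: "\<forall>l<t. \<pi> l < t" "\<forall>l<t. \<pi> (\<pi> l) = l"
  shows "avg_vecs N t (\<lambda>y. G (override_on x (y \<circ> \<pi>) R)) = avg_vecs N t (\<lambda>y. G (override_on x y R))"
proof -
  define \<tau> where "\<tau> = (\<lambda>(y::nat\<Rightarrow>int) l. if l < t then y (\<pi> l) else undefined)"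
  have "override_on x (\<tau> y) R = override_on x (y \<circ> \<pi>) R" for y
    using R by (auto simp: override_on_def \<tau>_def fun_eq_iff)
  moreover have "\<tau> y \<in> ZN_vecs N t" if "y \<in> ZN_vecs N t" for y
    using that \<pi> unfolding \<tau>_def ZN_vecs_def PiE_def Pi_def extensional_def by auto
  moreover have "inj_on \<tau> (ZN_vecs N t)"
  proof (rule inj_onI, rule ext)
    fix y1 y2 m assume y: "y1 \<in> ZN_vecs N t" "y2 \<in> ZN_vecs N t" and e: "\<tau> y1 = \<tau> y2"
    show "y1 m = y2 m"
    proof (cases "m < t")
      case True
      then show ?thesis using fun_cong[OF e, of "\<pi> m"] \<pi> by (simp add: \<tau>_def)
    next
      case False
      then show ?thesis using y unfolding ZN_vecs_def PiE_def extensional_def by auto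
    qed
  qed
  ultimately show ?thesis
    using avg_vecs_reindex[of N t \<tau> "\<lambda>y. G (override_on x y R)"] by simp
qed

section \<open>Cauchy--Schwarz by doubling coordinates\<close>

lemma sum_Cauchy_Schwarz_dominated:
  fixes b p A :: "'a \<Rightarrow> real"
  assumes bp: "\<And>x. x \<in> X \<Longrightarrow> \<bar>b x\<bar> \<le> p x"
  shows "(\<Sum>x\<in>X. b x * A x)\<^sup>2 \<le> (\<Sum>x\<in>X. p x) * (\<Sum>x\<in>X. p x * (A x)\<^sup>2)"
proof -
  have "(\<Sum>x\<in>X. b x * A x)\<^sup>2 = \<bar>\<Sum>x\<in>X. b x * A x\<bar>\<^sup>2"
    by simp
  also have "\<dots> \<le> (\<Sum>x\<in>X. sqrt \<bar>b x\<bar> * (sqrt \<bar>b x\<bar> * \<bar>A x\<bar>))\<^sup>2"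
    by (intro power_mono order_trans[OF sum_abs]) (auto simp: abs_mult mult.assoc[symmetric])
  also have "\<dots> \<le> (\<Sum>x\<in>X. \<bar>b x\<bar>) * (\<Sum>x\<in>X. \<bar>b x\<bar> * (A x)\<^sup>2)"
    using Cauchy_Schwarz_ineq_sum[of "\<lambda>x. sqrt \<bar>b x\<bar>" "\<lambda>x. sqrt \<bar>b x\<bar> * \<bar>A x\<bar>" X]
    by (simp add: power_mult_distrib)
  also have "\<dots> \<le> (\<Sum>x\<in>X. p x) * (\<Sum>x\<in>X. p x * (A x)\<^sup>2)"
    using bp by (intro mult_mono sum_mono sum_nonneg mult_right_mono)
      (auto intro: order_trans[OF abs_ge_zero])
  finally show ?thesis .
qed

lemma avg_vecs_Cauchy_Schwarz_dominated:
  assumes "\<And>x. \<bar>b x\<bar> \<le> p x"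
  shows "(avg_vecs N t (\<lambda>x. b x * A x))\<^sup>2 \<le> avg_vecs N t p * avg_vecs N t (\<lambda>x. p x * (A x)\<^sup>2)"
proof -
  define M where "M = real (N ^ t)"
  have "(\<Sum>x\<in>ZN_vecs N t. b x * A x)\<^sup>2 / M\<^sup>2
      \<le> (\<Sum>x\<in>ZN_vecs N t. p x) * (\<Sum>x\<in>ZN_vecs N t. p x * (A x)\<^sup>2) / M\<^sup>2"
    using sum_Cauchy_Schwarz_dominated[of "ZN_vecs N t" b p A] assms
    by (simp add: divide_right_mono)
  then show ?thesis
    unfolding avg_vecs_def M_def[symmetric] by (simp add: power_divide power2_eq_square)
qed

text \<open>Resample first the coordinates in \<open>R\<close>, then those in \<open>\<pi> ` R\<close>.\<close>

lemma avg_vecs_doubled_eq_avg_square: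
  fixes a p :: "(nat \<Rightarrow> int) \<Rightarrow> real"
  assumes R: "R \<subseteq> {..<t}" and \<pi>: "\<forall>l<t. \<pi> l < t" "\<forall>l<t. \<pi> (\<pi> l) = l" "\<forall>l\<in>R. \<pi> l \<notin> R"
    and p: "\<And>x y. p (override_on x y R) = p x" "\<And>x y. p (override_on x y (\<pi> ` R)) = p x"
    and a: "\<And>x y. a (override_on x y (\<pi> ` R)) = a x"
  shows "avg_vecs N t (\<lambda>x. p x * a x * a (override_on x (x \<circ> \<pi>) R))
       = avg_vecs N t (\<lambda>x. p x * (avg_vecs N t (\<lambda>y. a (override_on x y R)))\<^sup>2)"
proof -
  define A where "A x = avg_vecs N t (\<lambda>y. a (override_on x y R))" for x
  define \<Psi> where "\<Psi> x = p x * A x * a (override_on x (x \<circ> \<pi>) R)" for x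
  have disj: "R \<inter> \<pi> ` R = {}" using \<pi>(3) by auto
  have "avg_vecs N t (\<lambda>x. p x * a x * a (override_on x (x \<circ> \<pi>) R))
      = avg_vecs N t (\<lambda>x. avg_vecs N t
          (\<lambda>y. p x * a (override_on x y R) * a (override_on x (x \<circ> \<pi>) R)))"
  proof -
    have "override_on (override_on x y R) (override_on x y R \<circ> \<pi>) R = override_on x (x \<circ> \<pi>) R"
      for x y :: "nat \<Rightarrow> int"
      using \<pi>(3) by (auto simp: override_on_def fun_eq_iff)
    then show ?thesis
      using avg_vecs_override[of N t "\<lambda>x. p x * a x * a (override_on x (x \<circ> \<pi>) R)" R]
      by (simp add: p)
  qed
  also have "\<dots> = avg_vecs N t \<Psi>"
    unfolding \<Psi>_def A_def by (simp only: avg_vecs_multc avg_vecs_cmult)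
  also have "\<dots> = avg_vecs N t (\<lambda>x. avg_vecs N t (\<lambda>y. \<Psi> (override_on x y (\<pi> ` R))))"
    by (rule avg_vecs_override[symmetric])
  also have "\<dots> = avg_vecs N t (\<lambda>x. p x * A x * A x)"
  proof (rule avg_vecs_cong)
    fix x
    have "override_on (override_on x y (\<pi> ` R)) z R = override_on (override_on x z R) y (\<pi> ` R)"
      for y z :: "nat \<Rightarrow> int"
      using disj by (auto simp: override_on_def fun_eq_iff)
    then have "A (override_on x y (\<pi> ` R)) = A x" for y
      unfolding A_def by (simp add: a)
    moreover have "override_on (override_on x y (\<pi> ` R)) (override_on x y (\<pi> ` R) \<circ> \<pi>) R
        = override_on (override_on x (y \<circ> \<pi>) R) y (\<pi> ` R)" for y
      using disj by (auto simp: override_on_def fun_eq_iff)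
    ultimately have "avg_vecs N t (\<lambda>y. \<Psi> (override_on x y (\<pi> ` R)))
        = p x * A x * avg_vecs N t (\<lambda>y. a (override_on x (y \<circ> \<pi>) R))"
      unfolding \<Psi>_def by (simp add: p a avg_vecs_cmult)
    also have "\<dots> = p x * A x * A x"
      unfolding A_def by (simp add: avg_vecs_permute_overridden[OF R \<pi>(1,2)])
    finally show "avg_vecs N t (\<lambda>y. \<Psi> (override_on x y (\<pi> ` R))) = p x * A x * A x" .
  qed
  finally show ?thesis
    unfolding A_def by (simp add: power2_eq_square mult.assoc)
qed

lemma avg_vecs_Cauchy_Schwarz_doubling:
  fixes a b p :: "(nat \<Rightarrow> int) \<Rightarrow> real"
  assumes R: "R \<subseteq> {..<t}" and \<pi>: "\<forall>l<t. \<pi> l < t" "\<forall>l<t. \<pi> (\<pi> l) = l" "\<forall>l\<in>R. \<pi> l \<notin> R"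
    and b: "\<And>x y. b (override_on x y R) = b x"
    and p: "\<And>x y. p (override_on x y R) = p x" "\<And>x y. p (override_on x y (\<pi> ` R)) = p x"
    and a: "\<And>x y. a (override_on x y (\<pi> ` R)) = a x"
    and bp: "\<And>x. \<bar>b x\<bar> \<le> p x"
  shows "(avg_vecs N t (\<lambda>x. a x * b x))\<^sup>2
           \<le> avg_vecs N t p * avg_vecs N t (\<lambda>x. p x * a x * a (override_on x (x \<circ> \<pi>) R))"
    and "0 \<le> avg_vecs N t (\<lambda>x. p x * a x * a (override_on x (x \<circ> \<pi>) R))"
proof -
  define A where "A x = avg_vecs N t (\<lambda>y. a (override_on x y R))" for x
  note doubled = avg_vecs_doubled_eq_avg_square[OF R \<pi> p a, of N, folded A_def]
  have "avg_vecs N t (\<lambda>x. a x * b x) = avg_vecs N t (\<lambda>x. b x * A x)"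
    using avg_vecs_override[of N t "\<lambda>x. a x * b x" R]
    by (simp add: b A_def avg_vecs_cmult mult.commute)
  then show "(avg_vecs N t (\<lambda>x. a x * b x))\<^sup>2
           \<le> avg_vecs N t p * avg_vecs N t (\<lambda>x. p x * a x * a (override_on x (x \<circ> \<pi>) R))"
    unfolding doubled using avg_vecs_Cauchy_Schwarz_dominated[OF bp] by simp
  show "0 \<le> avg_vecs N t (\<lambda>x. p x * a x * a (override_on x (x \<circ> \<pi>) R))"
    unfolding doubled using bp
    by (intro avg_vecs_nonneg mult_nonneg_nonneg) (auto intro: order_trans[OF abs_ge_zero])
qed

section \<open>Iterated Cauchy--Schwarz on a cube\<close>

definition cube_vertex :: "nat \<Rightarrow> nat set \<Rightarrow> (nat \<Rightarrow> int) \<Rightarrow> nat \<Rightarrow> int" where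
  "cube_vertex K \<omega> x = (\<lambda>l. if l < K then (if l \<in> \<omega> then x l else x (K + l)) else 0)"

lemma cube_vertex_override_low:
  "i \<notin> \<omega> \<Longrightarrow> i < K \<Longrightarrow> cube_vertex K \<omega> (override_on x y {i}) = cube_vertex K \<omega> x"
  by (auto simp: cube_vertex_def override_on_def fun_eq_iff)

lemma cube_vertex_override_high:
  "i \<notin> \<omega> \<Longrightarrow> i < K \<Longrightarrow>
    cube_vertex K \<omega> (override_on x y {K + i}) = (cube_vertex K \<omega> x)(i := y (K + i))"
  by (auto simp: cube_vertex_def fun_eq_iff)

lemma cube_vertex_insert:
  "i \<notin> \<omega> \<Longrightarrow> i < K \<Longrightarrow>
    cube_vertex K (insert i \<omega>) x
      = cube_vertex K \<omega> (override_on x (x \<circ> transpose i (K + i)) {K + i})"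
  by (auto simp: cube_vertex_def transpose_def fun_eq_iff)

text \<open>In \<open>cube_avg D\<close> the directions in \<open>D\<close> have been doubled: \<open>G0\<close> is evaluated at every
  vertex \<open>\<omega> \<subseteq> D\<close>, while each \<open>G j\<close> with \<open>j \<in> D\<close> has been traded for its majorant \<open>W j\<close> on
  the vertices not containing \<open>j\<close> and dropped on the others. As \<open>G i\<close> ignores the \<open>i\<close>-th
  coordinate, Cauchy--Schwarz in that coordinate adds \<open>i\<close> to \<open>D\<close>.\<close>

locale cs_cube =
  fixes N K T :: nat and G0 :: "(nat \<Rightarrow> int) \<Rightarrow> real" and G W :: "nat \<Rightarrow> (nat \<Rightarrow> int) \<Rightarrow> real"
  assumes KT: "2 * K \<le> T"
    and G_indep: "\<And>i y s. i < K \<Longrightarrow> G i (y(i := s)) = G i y"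
    and W_indep: "\<And>i y s. i < K \<Longrightarrow> W i (y(i := s)) = W i y"
    and G_le_W: "\<And>i y. i < K \<Longrightarrow> \<bar>G i y\<bar> \<le> W i y"
begin

definition cube_term :: "nat set \<Rightarrow> nat set \<Rightarrow> (nat \<Rightarrow> int) \<Rightarrow> real" where
  "cube_term D \<omega> x = G0 (cube_vertex K \<omega> x) * (\<Prod>j\<in>D - \<omega>. W j (cube_vertex K \<omega> x))
                      * (\<Prod>j\<in>{..<K} - D. G j (cube_vertex K \<omega> x))"

definition cube_avg :: "nat set \<Rightarrow> real" where
  "cube_avg D = avg_vecs N T (\<lambda>x. \<Prod>\<omega>\<in>Pow D. cube_term D \<omega> x)"

definition weight_avg :: "nat set \<Rightarrow> nat \<Rightarrow> real" where
  "weight_avg D i = avg_vecs N T (\<lambda>x. \<Prod>\<omega>\<in>Pow D. W i (cube_vertex K \<omega> x))"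

definition cube_rest :: "nat set \<Rightarrow> nat \<Rightarrow> nat set \<Rightarrow> (nat \<Rightarrow> int) \<Rightarrow> real" where
  "cube_rest D i \<omega> x = G0 (cube_vertex K \<omega> x) * (\<Prod>j\<in>D - \<omega>. W j (cube_vertex K \<omega> x))
                        * (\<Prod>j\<in>{..<K} - D - {i}. G j (cube_vertex K \<omega> x))"

lemma W_nonneg: "i < K \<Longrightarrow> 0 \<le> W i y"
  using G_le_W[of i y] by linarith

lemma weight_avg_nonneg: "i < K \<Longrightarrow> 0 \<le> weight_avg D i"
  unfolding weight_avg_def using W_nonneg by (intro avg_vecs_nonneg prod_nonneg) auto

lemma cube_term_eq_G_rest:
  assumes "i < K" "i \<notin> D"
  shows "cube_term D \<omega> x = G i (cube_vertex K \<omega> x) * cube_rest D i \<omega> x"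
proof -
  have KD: "{..<K} - D = insert i ({..<K} - D - {i})" using assms by auto
  show ?thesis
    unfolding cube_term_def cube_rest_def by (subst KD) (simp add: prod.insert_remove)
qed

lemma cube_term_insert_outside:
  assumes "D \<subseteq> {..<K}" "i \<notin> D" "\<omega> \<subseteq> D"
  shows "cube_term (insert i D) \<omega> x = W i (cube_vertex K \<omega> x) * cube_rest D i \<omega> x"
proof -
  have "insert i D - \<omega> = insert i (D - \<omega>)" "i \<notin> D - \<omega>" "finite (D - \<omega>)"
    using assms by (auto intro: finite_subset)
  moreover have "{..<K} - insert i D = {..<K} - D - {i}" by auto
  ultimately show ?thesis
    unfolding cube_term_def cube_rest_def by (simp add: algebra_simps)
qed

lemma cube_term_insert_inside:
  assumes "i < K" "i \<notin> D" "\<omega> \<subseteq> D"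
  shows "cube_term (insert i D) (insert i \<omega>) x
           = cube_rest D i \<omega> (override_on x (x \<circ> transpose i (K + i)) {K + i})"
proof -
  have "insert i D - insert i \<omega> = D - \<omega>" using assms by auto
  moreover have "{..<K} - insert i D = {..<K} - D - {i}" by auto
  moreover have "i \<notin> \<omega>" using assms by auto
  ultimately show ?thesis
    unfolding cube_term_def cube_rest_def using cube_vertex_insert[of i \<omega> K x] assms by simp
qed

lemma cube_avg_insert:
  assumes D: "D \<subseteq> {..<K}" and i: "i < K" "i \<notin> D"
  shows "cube_avg (insert i D)
    = avg_vecs N T (\<lambda>x. (\<Prod>\<omega>\<in>Pow D. W i (cube_vertex K \<omega> x)) * (\<Prod>\<omega>\<in>Pow D. cube_rest D i \<omega> x)
        * (\<Prod>\<omega>\<in>Pow D. cube_rest D i \<omega> (override_on x (x \<circ> transpose i (K + i)) {K + i})))"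
proof -
  have fin: "finite (Pow D)" using finite_subset[OF D] by blast
  have disj: "Pow D \<inter> insert i ` Pow D = {}" and inj: "inj_on (insert i) (Pow D)"
    using i by (auto simp: inj_on_def)
  have "(\<Prod>\<omega>\<in>Pow (insert i D). cube_term (insert i D) \<omega> x)
      = (\<Prod>\<omega>\<in>Pow D. cube_term (insert i D) \<omega> x) * (\<Prod>\<omega>\<in>Pow D. cube_term (insert i D) (insert i \<omega>) x)"
    for x
    unfolding Pow_insert using fin disj
    by (simp add: prod.union_disjoint prod.reindex[OF inj])
  then show ?thesis
    unfolding cube_avg_def using assms
    by (simp add: cube_term_insert_outside cube_term_insert_inside prod.distrib)
qed

lemma cube_avg_square_le:
  assumes D: "D \<subseteq> {..<K}" and i: "i < K" "i \<notin> D"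
  shows "(cube_avg D)\<^sup>2 \<le> weight_avg D i * cube_avg (insert i D)"
    and "0 \<le> cube_avg (insert i D)"
proof -
  define \<pi> where "\<pi> = transpose i (K + i)"
  define a where "a x = (\<Prod>\<omega>\<in>Pow D. cube_rest D i \<omega> x)" for x
  define b where "b x = (\<Prod>\<omega>\<in>Pow D. G i (cube_vertex K \<omega> x))" for x
  define p where "p x = (\<Prod>\<omega>\<in>Pow D. W i (cube_vertex K \<omega> x))" for x
  have not_i: "i \<notin> \<omega>" if "\<omega> \<in> Pow D" for \<omega> using that i by auto
  have \<pi>R: "\<pi> ` {K + i} = {i}" by (simp add: \<pi>_def)
  have R: "{K + i} \<subseteq> {..<T}" and \<pi>: "\<forall>l<T. \<pi> l < T" "\<forall>l<T. \<pi> (\<pi> l) = l" "\<forall>l\<in>{K + i}. \<pi> l \<notin> {K + i}"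
    using i KT by (auto simp: \<pi>_def transpose_def)
  have inv: "b (override_on x y {K + i}) = b x" "p (override_on x y {K + i}) = p x"
    "p (override_on x y (\<pi> ` {K + i})) = p x" "a (override_on x y (\<pi> ` {K + i})) = a x" for x y
    unfolding a_def b_def p_def \<pi>R using not_i i
    by (auto intro!: prod.cong simp: cube_vertex_override_high cube_vertex_override_low
        G_indep W_indep cube_rest_def)
  have bp: "\<bar>b x\<bar> \<le> p x" for x
    unfolding b_def p_def using i by (simp add: abs_prod G_le_W prod_mono)
  note cs = avg_vecs_Cauchy_Schwarz_doubling[OF R \<pi> inv bp, of N]
  have "cube_avg D = avg_vecs N T (\<lambda>x. a x * b x)"
    unfolding cube_avg_def a_def b_def using i
    by (simp add: cube_term_eq_G_rest prod.distrib mult.commute)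
  moreover have "weight_avg D i = avg_vecs N T p"
    unfolding weight_avg_def p_def ..
  moreover have "cube_avg (insert i D)
      = avg_vecs N T (\<lambda>x. p x * a x * a (override_on x (x \<circ> \<pi>) {K + i}))"
    unfolding cube_avg_insert[OF assms] a_def p_def \<pi>_def ..
  ultimately show "(cube_avg D)\<^sup>2 \<le> weight_avg D i * cube_avg (insert i D)"
    and "0 \<le> cube_avg (insert i D)"
    using cs by simp_all
qed

lemma cube_avg_nonneg: "0 < n \<Longrightarrow> n \<le> K \<Longrightarrow> 0 \<le> cube_avg {..<n}"
proof -
  assume "0 < n" "n \<le> K"
  then obtain m where m: "n = Suc m" "m < K" by (cases n) auto
  then have "{..<n} = insert m {..<m}" by auto
  then show ?thesis using cube_avg_square_le(2)[of "{..<m}" m] m by auto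
qed

lemma cube_avg_power_le:
  assumes B: "\<And>D i. D \<subseteq> {..<K} \<Longrightarrow> i < K \<Longrightarrow> i \<notin> D \<Longrightarrow> weight_avg D i \<le> B"
  shows "n \<le> K \<Longrightarrow> \<bar>cube_avg {}\<bar> ^ (2 ^ n) \<le> B ^ (2 ^ n - 1) * \<bar>cube_avg {..<n}\<bar>"
proof (induction n)
  case 0
  then show ?case by simp
next
  case (Suc n)
  then have IH: "\<bar>cube_avg {}\<bar> ^ (2 ^ n) \<le> B ^ (2 ^ n - 1) * \<bar>cube_avg {..<n}\<bar>" and n: "n < K"
    by auto
  have ins: "insert n {..<n} = {..<Suc n}" by auto
  have step: "(cube_avg {..<n})\<^sup>2 \<le> weight_avg {..<n} n * cube_avg {..<Suc n}"
    using cube_avg_square_le(1)[of "{..<n}" n] n ins by auto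
  have B_bound: "0 \<le> weight_avg {..<n} n" "weight_avg {..<n} n \<le> B"
    using weight_avg_nonneg B[of "{..<n}" n] n by auto
  have pos: "0 \<le> cube_avg {..<Suc n}"
    using cube_avg_nonneg[of "Suc n"] n by simp
  have "\<bar>cube_avg {}\<bar> ^ (2 ^ Suc n) = (\<bar>cube_avg {}\<bar> ^ (2 ^ n))\<^sup>2"
    by (simp add: power_mult[symmetric] mult.commute)
  also have "\<dots> \<le> (B ^ (2 ^ n - 1) * \<bar>cube_avg {..<n}\<bar>)\<^sup>2"
    using IH by (intro power_mono) auto
  also have "\<dots> = B ^ (2 * (2 ^ n - 1)) * (cube_avg {..<n})\<^sup>2"
    by (simp add: power_mult_distrib power_mult[symmetric] mult.commute)
  also have "\<dots> \<le> B ^ (2 * (2 ^ n - 1)) * (B * cube_avg {..<Suc n})"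
    using step B_bound pos
    by (intro mult_left_mono order_trans[OF step] mult_right_mono) auto
  also have "\<dots> = B ^ (2 ^ Suc n - 1) * \<bar>cube_avg {..<Suc n}\<bar>"
  proof -
    have "2 * (2 ^ n - 1) + 1 = (2::nat) ^ Suc n - 1" by (induction n) auto
    then have "B ^ (2 * (2 ^ n - 1)) * B = B ^ (2 ^ Suc n - 1)"
      by (metis power_add power_one_right)
    then show ?thesis using pos by (simp add: mult.assoc[symmetric])
  qed
  finally show ?case .
qed

end

section \<open>The progression average after a change of variables\<close>

text \<open>In the application \<open>g j = f j / 2\<close> and \<open>nu = (1 + \<nu>\<^sub>N) / 2\<close>, so that \<open>nu\<close> majorises every
  \<open>g j\<close>; \<open>a\<close> is the index whose Gowers norm bounds the progression average.\<close>

locale gvn_setting =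
  fixes N k a :: nat and nu :: "int \<Rightarrow> real" and g :: "nat \<Rightarrow> int \<Rightarrow> real"
  assumes prime: "prime N" and k2: "k \<ge> 2" and a_le_k: "a \<le> k" and N_large: "N > 2 * k * k"
    and nu_nonneg: "\<And>x. x \<in> ZN N \<Longrightarrow> nu x \<ge> 0"
    and g_le_nu: "\<And>j x. j \<le> k \<Longrightarrow> x \<in> ZN N \<Longrightarrow> \<bar>g j x\<bar> \<le> nu x"
begin

lemma N_pos: "N > 0"
  using prime prime_gt_0_nat by blast

text \<open>\<open>skip\<close> enumerates \<open>{0..k} - {a}\<close>, and \<open>x + j s\<close> becomes \<open>lform (coeff j) y\<close> under the
  substitution \<open>x = \<Sum>l<k. skip l * y l\<close>, \<open>s = - (\<Sum>l<k. y l)\<close>.\<close>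

definition skip :: "nat \<Rightarrow> nat" where
  "skip l = (if l < a then l else Suc l)"

definition coeff :: "nat \<Rightarrow> nat \<Rightarrow> int" where
  "coeff j l = int (skip l) - int j"

definition lform :: "(nat \<Rightarrow> int) \<Rightarrow> (nat \<Rightarrow> int) \<Rightarrow> int" where
  "lform e y = (\<Sum>l<k. e l * y l)"

definition g_form :: "nat \<Rightarrow> (nat \<Rightarrow> int) \<Rightarrow> real" where
  "g_form j y = g j (lform (coeff j) y mod int N)"

definition nu_form :: "nat \<Rightarrow> (nat \<Rightarrow> int) \<Rightarrow> real" where
  "nu_form j y = nu (lform (coeff j) y mod int N)"

lemma skip_le: "l < k \<Longrightarrow> skip l \<le> k"
  unfolding skip_def by auto

lemma skip_neq: "skip l \<noteq> a"
  unfolding skip_def by auto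

lemma skip_inj: "skip l = skip m \<Longrightarrow> l = m"
  unfolding skip_def by (auto split: if_splits)

lemma coeff_skip_eq_0_iff: "coeff (skip i) l = 0 \<longleftrightarrow> l = i"
  unfolding coeff_def using skip_inj by auto

lemma coeff_a_nonzero: "coeff a l \<noteq> 0"
  unfolding coeff_def using skip_neq by auto

lemma abs_coeff_le: "l < k \<Longrightarrow> j \<le> k \<Longrightarrow> \<bar>coeff j l\<bar> \<le> int k"
  unfolding coeff_def using skip_le[of l] by auto

lemma lform_coeff_skip_upd: "lform (coeff (skip i)) (y(i := s)) = lform (coeff (skip i)) y"
  unfolding lform_def by (intro sum.cong refl) (auto simp: coeff_def)

text \<open>Vectors have \<open>4 * k\<close> coordinates: the first \<open>2 * k\<close> span the cube, the two blocks
  after them are used in the last Cauchy--Schwarz step.\<close>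

sublocale cs_cube N k "4 * k" "g_form a" "\<lambda>i. g_form (skip i)" "\<lambda>i. nu_form (skip i)"
proof
  show "g_form (skip i) (y(i := s)) = g_form (skip i) y"
    and "nu_form (skip i) (y(i := s)) = nu_form (skip i) y" for i y s
    unfolding g_form_def nu_form_def by (simp_all add: lform_coeff_skip_upd)
  show "\<bar>g_form (skip i) y\<bar> \<le> nu_form (skip i) y" if "i < k" for i y
    unfolding g_form_def nu_form_def using that by (intro g_le_nu skip_le mod_in_ZN N_pos)
qed simp

definition vertex_coeff :: "(nat \<Rightarrow> int) \<Rightarrow> nat set \<Rightarrow> nat \<Rightarrow> int" where
  "vertex_coeff e \<omega> p = (if p < k then (if p \<in> \<omega> then e p else 0)
                  else if p < 2*k then (if p - k \<in> \<omega> then 0 else e (p - k)) else 0)"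

lemma lform_cube_vertex: "lform e (cube_vertex k \<omega> x) = (\<Sum>p<4 * k. vertex_coeff e \<omega> p * x p)"
proof -
  have "(\<Sum>p<4 * k. vertex_coeff e \<omega> p * x p) = (\<Sum>p<k + k. vertex_coeff e \<omega> p * x p)"
    by (intro sum.mono_neutral_cong_right) (auto simp: vertex_coeff_def)
  also have "\<dots> = (\<Sum>l<k. vertex_coeff e \<omega> l * x l + vertex_coeff e \<omega> (k + l) * x (k + l))"
    by (simp add: sum_lessThan_add sum.distrib)
  also have "\<dots> = lform e (cube_vertex k \<omega> x)"
    unfolding lform_def by (intro sum.cong) (auto simp: vertex_coeff_def cube_vertex_def)
  finally show ?thesis ..
qed

text \<open>\<open>shift B\<close> adds to the first \<open>k\<close> coordinates (and, equally, to the next \<open>k\<close>) a vector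
  built from the block \<open>x (B + 1), ..., x (B + k - 1)\<close> that is orthogonal to \<open>coeff a\<close>:
  the forms of \<open>g a\<close> are unchanged, while all other forms acquire a dependence on the block.\<close>

definition block :: "nat \<Rightarrow> nat set" where
  "block B = {B<..<B + k}"

definition shift_vec :: "nat \<Rightarrow> (nat \<Rightarrow> int) \<Rightarrow> nat \<Rightarrow> int" where
  "shift_vec B x q = (if q = 0 then - (\<Sum>r\<in>{1..<k}. coeff a r * x (B + r))
                      else if q < k then coeff a 0 * x (B + q) else 0)"

definition shift :: "nat \<Rightarrow> (nat \<Rightarrow> int) \<Rightarrow> nat \<Rightarrow> int" where
  "shift B x l = (if l < 2 * k then (x l + shift_vec B x (l mod k)) mod int N else x l)"

definition shift_coeff :: "nat \<Rightarrow> (nat \<Rightarrow> int) \<Rightarrow> nat \<Rightarrow> int" where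
  "shift_coeff B e p = (if p \<in> block B then coeff a 0 * e (p - B) - coeff a (p - B) * e 0 else 0)"

lemma cube_vertex_shift:
  "cube_vertex k \<omega> (shift B x)
      = (\<lambda>l. if l < k then (cube_vertex k \<omega> x l + shift_vec B x l) mod int N else 0)"
  by (auto simp: cube_vertex_def shift_def fun_eq_iff)

lemma sum_mult_shift_vec:
  "(\<Sum>l<k. e l * shift_vec B x l) = (\<Sum>q\<in>{1..<k}. (coeff a 0 * e q - coeff a q * e 0) * x (B + q))"
proof -
  have "{..<k} = insert 0 {1..<k}" using k2 by auto
  then have "(\<Sum>l<k. e l * shift_vec B x l)
      = - (\<Sum>r\<in>{1..<k}. e 0 * coeff a r * x (B + r)) + (\<Sum>l\<in>{1..<k}. e l * coeff a 0 * x (B + l))"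
    by (simp add: shift_vec_def sum_distrib_left mult.assoc)
  also have "\<dots> = (\<Sum>q\<in>{1..<k}. (coeff a 0 * e q - coeff a q * e 0) * x (B + q))"
    by (simp add: sum_subtractf[symmetric] algebra_simps)
  finally show ?thesis .
qed

lemma sum_shift_coeff:
  assumes "B + k \<le> 4 * k"
  shows "(\<Sum>p<4 * k. shift_coeff B e p * x p)
      = (\<Sum>q\<in>{1..<k}. (coeff a 0 * e q - coeff a q * e 0) * x (B + q))"
proof -
  have block: "block B = (\<lambda>q. B + q) ` {1..<k}"
    unfolding block_def by (auto simp: image_iff intro!: bexI[of _ "_ - B"])
  have "(\<Sum>q\<in>{1..<k}. (coeff a 0 * e q - coeff a q * e 0) * x (B + q))
      = (\<Sum>p\<in>block B. (coeff a 0 * e (p - B) - coeff a (p - B) * e 0) * x p)"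
    unfolding block by (subst sum.reindex) (auto simp: inj_on_def)
  also have "\<dots> = (\<Sum>p<4 * k. shift_coeff B e p * x p)"
    using assms by (intro sum.mono_neutral_cong_left) (auto simp: block_def shift_coeff_def)
  finally show ?thesis ..
qed

lemma lform_cube_vertex_shift_mod:
  "lform e (cube_vertex k \<omega> (shift B x)) mod int N
     = (lform e (cube_vertex k \<omega> x) + (\<Sum>l<k. e l * shift_vec B x l)) mod int N"
proof -
  have "lform e (cube_vertex k \<omega> (shift B x)) mod int N
      = (\<Sum>l<k. e l * ((cube_vertex k \<omega> x l + shift_vec B x l) mod int N)) mod int N"
    unfolding lform_def cube_vertex_shift by simp
  also have "\<dots> = (\<Sum>l<k. e l * (cube_vertex k \<omega> x l + shift_vec B x l)) mod int N"
    by (rule sum_mult_mod_mod)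
  finally show ?thesis
    unfolding lform_def by (simp add: algebra_simps sum.distrib)
qed

lemma lform_cube_vertex_shift:
  assumes "B + k \<le> 4 * k"
  shows "lform e (cube_vertex k \<omega> (shift B x)) mod int N
           = (\<Sum>p<4 * k. (vertex_coeff e \<omega> p + shift_coeff B e p) * x p) mod int N"
proof -
  have "lform e (cube_vertex k \<omega> x) + (\<Sum>l<k. e l * shift_vec B x l)
      = (\<Sum>p<4 * k. (vertex_coeff e \<omega> p + shift_coeff B e p) * x p)"
    unfolding lform_cube_vertex sum_mult_shift_vec sum_shift_coeff[OF assms, symmetric]
    by (simp add: algebra_simps sum.distrib)
  then show ?thesis
    by (simp add: lform_cube_vertex_shift_mod)
qed

lemma lform_coeff_a_shift:
  "lform (coeff a) (cube_vertex k \<omega> (shift B x)) mod int N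
      = lform (coeff a) (cube_vertex k \<omega> x) mod int N"
  unfolding lform_cube_vertex_shift_mod sum_mult_shift_vec by (simp add: mult.commute)

section \<open>The last Cauchy--Schwarz step\<close>

definition nu_box :: "(nat \<Rightarrow> int) \<Rightarrow> real" where
  "nu_box x = (\<Prod>\<omega>\<in>Pow {..<k}. nu_form a (cube_vertex k \<omega> x))"

definition g_box :: "(nat \<Rightarrow> int) \<Rightarrow> real" where
  "g_box x = (\<Prod>\<omega>\<in>Pow {..<k}. g_form a (cube_vertex k \<omega> x))"

definition weight_box :: "(nat \<Rightarrow> int) \<Rightarrow> real" where
  "weight_box x = (\<Prod>\<omega>\<in>Pow {..<k}. \<Prod>i\<in>{..<k} - \<omega>. nu_form (skip i) (cube_vertex k \<omega> x))"

definition g_box_avg :: real where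
  "g_box_avg = avg_vecs N (4 * k) g_box"

definition swap_blocks :: "nat \<Rightarrow> nat" where
  "swap_blocks l = (if l \<in> block (2 * k) then l + k else if l \<in> block (3 * k) then l - k else l)"

lemma cube_avg_all: "cube_avg {..<k} = avg_vecs N (4 * k) (\<lambda>x. g_box x * weight_box x)"
  unfolding cube_avg_def cube_term_def g_box_def weight_box_def by (simp add: prod.distrib)

lemma cube_vertex_override_high_coords:
  assumes "\<And>l. l \<in> S \<Longrightarrow> 2 * k \<le> l"
  shows "cube_vertex k \<omega> (override_on x y S) = cube_vertex k \<omega> x"
proof -
  have "l \<notin> S" "k + l \<notin> S" if "l < k" for l using that assms by force+
  then show ?thesis by (auto simp: cube_vertex_def fun_eq_iff)
qed

lemma shift_vec_override:
  assumes "S \<inter> block B = {}"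
  shows "shift_vec B (override_on x y S) = shift_vec B x"
proof -
  have "B + q \<notin> S" if "0 < q" "q < k" for q using that assms by (auto simp: block_def)
  then show ?thesis unfolding shift_vec_def by (auto simp: fun_eq_iff intro!: sum.cong)
qed

lemma shift_in_ZN_vecs: "x \<in> ZN_vecs N (4*k) \<Longrightarrow> shift B x \<in> ZN_vecs N (4*k)"
  using N_pos unfolding ZN_vecs_def shift_def PiE_def Pi_def extensional_def
  by (auto intro: mod_in_ZN)

lemma inj_on_shift:
  assumes "2 * k \<le> B"
  shows "inj_on (shift B) (ZN_vecs N (4 * k))"
proof (rule inj_onI, rule ext)
  fix x y l assume x: "x \<in> ZN_vecs N (4 * k)" and y: "y \<in> ZN_vecs N (4 * k)"
    and e: "shift B x = shift B y"
  have high: "x l = y l" if "2 * k \<le> l" for l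
    using fun_cong[OF e, of l] that by (simp add: shift_def)
  then have "shift_vec B x = shift_vec B y"
    unfolding shift_vec_def using assms by (auto simp: fun_eq_iff intro!: sum.cong)
  then show "x l = y l"
    using fun_cong[OF e, of l] high[of l] ZN_vecs_memD[OF x] ZN_vecs_memD[OF y]
    by (cases "l < 2 * k") (auto simp: shift_def intro: ZN_add_mod_cancel)
qed

lemma g_box_shift: "g_box (shift B x) = g_box x"
  unfolding g_box_def g_form_def by (simp add: lform_coeff_a_shift)

lemma abs_g_box_le: "\<bar>g_box x\<bar> \<le> nu_box x"
  unfolding g_box_def nu_box_def g_form_def nu_form_def abs_prod
  by (intro prod_mono) (auto intro: g_le_nu a_le_k mod_in_ZN N_pos)

lemma nu_box_nonneg: "nu_box x \<ge> 0"
  unfolding nu_box_def nu_form_def by (intro prod_nonneg) (auto intro: nu_nonneg mod_in_ZN N_pos)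

lemma swap_blocks_image: "swap_blocks ` block (2 * k) = block (3 * k)"
proof
  show "swap_blocks ` block (2 * k) \<subseteq> block (3 * k)"
    by (auto simp: swap_blocks_def block_def)
  show "block (3 * k) \<subseteq> swap_blocks ` block (2 * k)"
  proof
    fix l assume "l \<in> block (3 * k)"
    then have "l - k \<in> block (2 * k)" "swap_blocks (l - k) = l"
      by (auto simp: block_def swap_blocks_def)
    then show "l \<in> swap_blocks ` block (2 * k)" by (metis image_eqI)
  qed
qed

lemma cube_vertex_shift_swap_blocks:
  "cube_vertex k \<omega> (shift (2 * k) (override_on x (x \<circ> swap_blocks) (block (2 * k))))
     = cube_vertex k \<omega> (shift (3 * k) x)"
proof -
  have w: "shift_vec (2 * k) (override_on x (x \<circ> swap_blocks) (block (2 * k)))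
      = shift_vec (3 * k) x"
    unfolding shift_vec_def block_def swap_blocks_def
    by (auto simp: fun_eq_iff algebra_simps intro!: sum.cong)
  have v: "cube_vertex k \<omega> (override_on x (x \<circ> swap_blocks) (block (2 * k))) = cube_vertex k \<omega> x"
    by (rule cube_vertex_override_high_coords) (auto simp: block_def)
  show ?thesis
    unfolding cube_vertex_shift w v ..
qed

text \<open>After the change of variables \<open>shift (2 * k)\<close>, \<open>g_box\<close> no longer sees the block
  \<open>block (2 * k)\<close> while \<open>weight_box\<close> does, so Cauchy--Schwarz in that block duplicates
  \<open>weight_box - 1\<close> onto the block \<open>block (3 * k)\<close>.\<close>

lemma cube_avg_all_deviation_square_le:
  "(cube_avg {..<k} - g_box_avg)\<^sup>2 \<le> avg_vecs N (4 * k) nu_box *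
     avg_vecs N (4 * k)
       (\<lambda>x. nu_box x * (weight_box (shift (2 * k) x) - 1) * (weight_box (shift (3 * k) x) - 1))"
proof -
  define R where "R = block (2 * k)"
  define a where "a x = weight_box (shift (2 * k) x) - 1" for x
  have "cube_avg {..<k} - g_box_avg = avg_vecs N (4 * k) (\<lambda>x. (weight_box x - 1) * g_box x)"
    unfolding cube_avg_all g_box_avg_def avg_vecs_diff[symmetric] by (simp add: algebra_simps)
  also have "\<dots> = avg_vecs N (4 * k)
      (\<lambda>x. (weight_box (shift (2 * k) x) - 1) * g_box (shift (2 * k) x))"
    by (rule avg_vecs_reindex[symmetric]) (auto intro: shift_in_ZN_vecs inj_on_shift)
  finally have deviation: "cube_avg {..<k} - g_box_avg = avg_vecs N (4 * k) (\<lambda>x. a x * g_box x)"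
    unfolding a_def by (simp add: g_box_shift)
  have R: "R \<subseteq> {..<4 * k}"
    and \<pi>: "\<forall>l<4 * k. swap_blocks l < 4 * k" "\<forall>l<4 * k. swap_blocks (swap_blocks l) = l"
      "\<forall>l\<in>R. swap_blocks l \<notin> R"
    by (auto simp: R_def block_def swap_blocks_def)
  have high: "\<And>l. l \<in> R \<Longrightarrow> 2 * k \<le> l" "\<And>l. l \<in> swap_blocks ` R \<Longrightarrow> 2 * k \<le> l"
    unfolding R_def swap_blocks_image by (auto simp: block_def)
  have inv: "g_box (override_on x y R) = g_box x" "nu_box (override_on x y R) = nu_box x"
    "nu_box (override_on x y (swap_blocks ` R)) = nu_box x" for x y
    unfolding g_box_def nu_box_def by (simp_all add: cube_vertex_override_high_coords[OF high(1)]
        cube_vertex_override_high_coords[OF high(2)])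
  have a_inv: "a (override_on x y (swap_blocks ` R)) = a x" for x y
  proof -
    have w: "shift_vec (2 * k) (override_on x y (swap_blocks ` R)) = shift_vec (2 * k) x"
      unfolding R_def swap_blocks_image by (rule shift_vec_override) (auto simp: block_def)
    have v: "cube_vertex k \<omega> (override_on x y (swap_blocks ` R)) = cube_vertex k \<omega> x" for \<omega>
      by (rule cube_vertex_override_high_coords[OF high(2)])
    show ?thesis
      unfolding a_def weight_box_def cube_vertex_shift w v ..
  qed
  note cs = avg_vecs_Cauchy_Schwarz_doubling[OF R \<pi> inv a_inv abs_g_box_le, of N]
  have "a (override_on x (x \<circ> swap_blocks) R) = weight_box (shift (3 * k) x) - 1" for x
    unfolding a_def R_def weight_box_def cube_vertex_shift_swap_blocks ..
  then show ?thesis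
    using cs(1) deviation unfolding a_def by (simp add: mult.commute mult.left_commute)
qed

lemma cube_avg_all_deviation_bound:
  assumes "0 \<le> \<delta>"
    and "\<bar>avg_vecs N (4 * k) nu_box - 1\<bar> \<le> \<delta>"
    and "\<bar>avg_vecs N (4 * k) (\<lambda>x. nu_box x * weight_box (shift (2 * k) x)) - 1\<bar> \<le> \<delta>"
    and "\<bar>avg_vecs N (4 * k) (\<lambda>x. nu_box x * weight_box (shift (3 * k) x)) - 1\<bar> \<le> \<delta>"
    and "\<bar>avg_vecs N (4 * k)
            (\<lambda>x. nu_box x * weight_box (shift (2 * k) x) * weight_box (shift (3 * k) x)) - 1\<bar> \<le> \<delta>"
  shows "(cube_avg {..<k} - g_box_avg)\<^sup>2 \<le> (1 + \<delta>) * (4 * \<delta>)"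
proof -
  define A where "A = avg_vecs N (4 * k) nu_box"
  define B where "B = avg_vecs N (4 * k)
    (\<lambda>x. nu_box x * (weight_box (shift (2 * k) x) - 1) * (weight_box (shift (3 * k) x) - 1))"
  have "B = avg_vecs N (4 * k)
        (\<lambda>x. nu_box x * weight_box (shift (2 * k) x) * weight_box (shift (3 * k) x))
      - avg_vecs N (4 * k) (\<lambda>x. nu_box x * weight_box (shift (2 * k) x))
      - avg_vecs N (4 * k) (\<lambda>x. nu_box x * weight_box (shift (3 * k) x)) + A"
    unfolding A_def B_def avg_vecs_diff[symmetric] avg_vecs_add[symmetric]
    by (simp add: algebra_simps)
  then have "B \<le> 4 * \<delta>" "A \<le> 1 + \<delta>"
    using assms unfolding A_def by linarith+
  moreover have "0 \<le> A"
    unfolding A_def using nu_box_nonneg by (intro avg_vecs_nonneg)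
  ultimately have "A * B \<le> (1 + \<delta>) * (4 * \<delta>)"
    using assms(1) by (cases "0 \<le> B") (auto intro: mult_mono order_trans[OF mult_nonneg_nonpos])
  then show ?thesis
    using cube_avg_all_deviation_square_le unfolding A_def B_def by linarith
qed

end

section \<open>The linear forms condition for finite families of forms\<close>

definition form_avg :: "nat \<Rightarrow> nat \<Rightarrow> (int \<Rightarrow> real) \<Rightarrow> 'i set \<Rightarrow> ('i \<Rightarrow> nat \<Rightarrow> int) \<Rightarrow> real" where
  "form_avg N t \<nu> J \<psi> = avg_vecs N t (\<lambda>x. \<Prod>\<iota>\<in>J. \<nu> ((\<Sum>l<t. \<psi> \<iota> l * x l) mod int N))"

definition admissible_forms :: "nat \<Rightarrow> nat \<Rightarrow> nat \<Rightarrow> 'i set \<Rightarrow> ('i \<Rightarrow> nat \<Rightarrow> int) \<Rightarrow> bool" where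
  "admissible_forms m0 t L J \<psi> \<longleftrightarrow> finite J \<and> card J \<le> m0 \<and> (\<forall>\<iota>\<in>J. \<forall>l<t. \<bar>\<psi> \<iota> l\<bar> \<le> int L)
     \<and> (\<forall>\<iota>\<in>J. \<exists>l<t. \<psi> \<iota> l \<noteq> 0) \<and> (\<forall>\<iota>\<in>J. \<forall>\<iota>'\<in>J. \<iota> \<noteq> \<iota>' \<longrightarrow> \<not> collinear_int t (\<psi> \<iota>) (\<psi> \<iota>'))"

lemma admissible_forms_subset:
  "admissible_forms m0 t L J \<psi> \<Longrightarrow> X \<subseteq> J \<Longrightarrow> admissible_forms m0 t L X \<psi>"
  unfolding admissible_forms_def by (meson card_mono dual_order.trans finite_subset subsetD)

lemma admissible_forms_enumerate:
  assumes adm: "admissible_forms m0 t L J \<psi>" and h: "bij_betw h {0..<card J} J"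
  shows "card J \<le> m0 \<and> (\<forall>i<card J. \<forall>j<t. \<bar>\<psi> (h i) j\<bar> \<le> int L) \<and> (\<forall>i<card J. \<exists>j<t. \<psi> (h i) j \<noteq> 0)
    \<and> (\<forall>i<card J. \<forall>i'<card J. i \<noteq> i' \<longrightarrow> \<not> collinear_int t (\<psi> (h i)) (\<psi> (h i')))"
proof -
  have "h i \<in> J" if "i < card J" for i using h that by (auto simp: bij_betw_def)
  moreover have "h i \<noteq> h i'" if "i < card J" "i' < card J" "i \<noteq> i'" for i i'
    using h that by (auto simp: bij_betw_def inj_on_def)
  ultimately show ?thesis using adm unfolding admissible_forms_def by blast
qed

lemma linear_forms_conditionD:
  assumes "linear_forms_condition m0 t L \<nu>" and "e > 0"
  shows "\<exists>N0. \<forall>N. prime N \<and> N \<ge> N0 \<longrightarrow>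
    (\<forall>(J::'i set) \<psi>. admissible_forms m0 t L J \<psi> \<longrightarrow> \<bar>form_avg N t (\<nu> N) J \<psi> - 1\<bar> \<le> e)"
proof -
  obtain N0 where N0: "\<forall>N. prime N \<and> N \<ge> N0 \<longrightarrow>
        (\<forall>m b Lm. m \<le> m0 \<and> (\<forall>i<m. \<forall>j<t. \<bar>Lm i j\<bar> \<le> int L) \<and> (\<forall>i<m. \<exists>j<t. Lm i j \<noteq> 0) \<and>
            (\<forall>i<m. \<forall>i'<m. i \<noteq> i' \<longrightarrow> \<not> collinear_int t (Lm i) (Lm i'))
          \<longrightarrow> \<bar>(\<Sum>x\<in>ZN_vecs N t. \<Prod>i<m. \<nu> N ((b i + (\<Sum>j<t. Lm i j * x j)) mod int N))
               / real (card (ZN_vecs N t)) - 1\<bar> \<le> e)"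
    using assms unfolding linear_forms_condition_def by blast
  show ?thesis
  proof (intro exI[of _ N0] allI impI)
    fix N :: nat and J :: "'i set" and \<psi>
    assume N: "prime N \<and> N \<ge> N0" and adm: "admissible_forms m0 t L J \<psi>"
    have "finite J" using adm unfolding admissible_forms_def by auto
    then obtain h where h: "bij_betw h {0..<card J} J" using ex_bij_betw_nat_finite by blast
    have "(\<Prod>i<card J. \<nu> N ((0 + (\<Sum>j<t. \<psi> (h i) j * x j)) mod int N))
        = (\<Prod>\<iota>\<in>J. \<nu> N ((\<Sum>l<t. \<psi> \<iota> l * x l) mod int N))" for x
      using prod.reindex_bij_betw[OF h, of "\<lambda>\<iota>. \<nu> N ((\<Sum>l<t. \<psi> \<iota> l * x l) mod int N)"]
      by (simp add: lessThan_atLeast0)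
    then show "\<bar>form_avg N t (\<nu> N) J \<psi> - 1\<bar> \<le> e"
      using N0[rule_format, of N "card J" "\<lambda>i. \<psi> (h i)" "\<lambda>_. 0"] N
        admissible_forms_enumerate[OF adm h]
      unfolding form_avg_def avg_vecs_def by simp
  qed
qed

lemma prod_half_one_plus:
  fixes u :: "'i \<Rightarrow> real"
  assumes "finite J"
  shows "(\<Prod>\<iota>\<in>J. (1 + u \<iota>) / 2) = (\<Sum>X\<in>Pow J. \<Prod>\<iota>\<in>X. u \<iota>) / 2 ^ card J"
proof -
  have "(\<Prod>\<iota>\<in>J. (1 + u \<iota>) / 2) = (\<Prod>\<iota>\<in>J. u \<iota> + 1) / 2 ^ card J"
    by (simp add: prod_dividef add.commute)
  also have "(\<Prod>\<iota>\<in>J. u \<iota> + 1) = (\<Sum>X\<in>Pow J. (\<Prod>\<iota>\<in>X. u \<iota>) * (\<Prod>\<iota>\<in>J - X. 1))"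
    by (rule prod_add[OF assms])
  finally show ?thesis by simp
qed

lemma abs_mean_minus_one_le:
  fixes f :: "'a \<Rightarrow> real"
  assumes "finite I" "I \<noteq> {}" "\<And>X. X \<in> I \<Longrightarrow> \<bar>f X - 1\<bar> \<le> e"
  shows "\<bar>(\<Sum>X\<in>I. f X) / card I - 1\<bar> \<le> e"
proof -
  have c: "real (card I) > 0" using assms by auto
  have "\<bar>(\<Sum>X\<in>I. f X) - card I\<bar> = \<bar>\<Sum>X\<in>I. f X - 1\<bar>"
    by (simp add: sum_subtractf)
  also have "\<dots> \<le> (\<Sum>X\<in>I. e)"
    using assms by (intro order_trans[OF sum_abs] sum_mono) auto
  finally have "\<bar>(\<Sum>X\<in>I. f X) - card I\<bar> \<le> card I * e" by simp
  moreover have "(\<Sum>X\<in>I. f X) / card I - 1 = ((\<Sum>X\<in>I. f X) - card I) / card I"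
    using c by (simp add: field_simps)
  ultimately show ?thesis
    using c by (simp add: abs_divide pos_divide_le_eq mult.commute)
qed

text \<open>Expand the product into averages over the subfamilies of \<open>J\<close>.\<close>

lemma linear_forms_condition_half_shift:
  assumes "linear_forms_condition m0 t L \<nu>" and "e > 0"
  shows "\<exists>N0. \<forall>N. prime N \<and> N \<ge> N0 \<longrightarrow> (\<forall>(J::'i set) \<psi>. admissible_forms m0 t L J \<psi> \<longrightarrow>
     \<bar>form_avg N t (\<lambda>z. (1 + \<nu> N z) / 2) J \<psi> - 1\<bar> \<le> e)"
proof -
  obtain N0 where N0: "\<forall>N. prime N \<and> N \<ge> N0 \<longrightarrow> (\<forall>(J::'i set) \<psi>. admissible_forms m0 t L J \<psi> \<longrightarrow>
     \<bar>form_avg N t (\<nu> N) J \<psi> - 1\<bar> \<le> e)"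
    using linear_forms_conditionD[OF assms] by blast
  show ?thesis
  proof (intro exI[of _ N0] allI impI)
    fix N :: nat and J :: "'i set" and \<psi>
    assume N: "prime N \<and> N \<ge> N0" and adm: "admissible_forms m0 t L J \<psi>"
    have fin: "finite J" using adm unfolding admissible_forms_def by auto
    have "form_avg N t (\<lambda>z. (1 + \<nu> N z) / 2) J \<psi>
        = (\<Sum>X\<in>Pow J. form_avg N t (\<nu> N) X \<psi>) / card (Pow J)"
      unfolding form_avg_def prod_half_one_plus[OF fin] card_Pow[OF fin]
      using fin by (simp add: avg_vecs_sum[symmetric] avg_vecs_multc[symmetric] divide_inverse)
    also have "\<bar>\<dots> - 1\<bar> \<le> e"
      using fin N N0 admissible_forms_subset[OF adm] by (intro abs_mean_minus_one_le) auto
    finally show "\<bar>form_avg N t (\<lambda>z. (1 + \<nu> N z) / 2) J \<psi> - 1\<bar> \<le> e" .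
  qed
qed

section \<open>The linear forms that occur\<close>

lemma not_collinear_intI:
  assumes "p < t" "q < t" "u p = 0" "v p \<noteq> 0" "u q \<noteq> 0"
  shows "\<not> collinear_int t u v"
proof
  assume "collinear_int t u v"
  then consider c where "\<forall>j<t. real_of_int (u j) = c * real_of_int (v j)"
    | c where "\<forall>j<t. real_of_int (v j) = c * real_of_int (u j)"
    unfolding collinear_int_def by blast
  then show False
  proof cases
    case 1
    then have "c = 0" using assms(1,3,4) by (metis mult_eq_0_iff of_int_0 of_int_eq_0_iff)
    then show False using 1 assms(2,5) by simp
  next
    case 2
    then show False using assms by (metis mult_zero_right of_int_0 of_int_eq_0_iff)
  qed
qed

lemma collinear_int_commute: "collinear_int t u v \<longleftrightarrow> collinear_int t v u"
  unfolding collinear_int_def by blast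

definition gvn_m0 :: "nat \<Rightarrow> nat" where
  "gvn_m0 k = (2 * k + 1) * 2 ^ k"

definition gvn_L :: "nat \<Rightarrow> nat" where
  "gvn_L k = 2 * k * k"

context gvn_setting
begin

text \<open>Index \<open>(0, 0, \<omega>)\<close> stands for the form of \<open>nu_box\<close> at the vertex \<open>\<omega>\<close>, and \<open>(s, i, \<omega>)\<close>
  with \<open>s = 1, 2, 3\<close> for the \<open>i\<close>-th form of \<open>weight_box\<close> at \<open>\<omega>\<close>, composed with the identity,
  \<open>shift (2 * k)\<close> and \<open>shift (3 * k)\<close> respectively.\<close>

definition form_vec :: "nat \<times> nat \<times> nat set \<Rightarrow> nat \<Rightarrow> int" where
  "form_vec \<iota> = (case \<iota> of (s, i, \<omega>) \<Rightarrow>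
     (if s = 0 then vertex_coeff (coeff a) \<omega>
      else if s = 1 then vertex_coeff (coeff (skip i)) \<omega>
      else if s = 2
        then (\<lambda>p. vertex_coeff (coeff (skip i)) \<omega> p + shift_coeff (2 * k) (coeff (skip i)) p)
      else (\<lambda>p. vertex_coeff (coeff (skip i)) \<omega> p + shift_coeff (3 * k) (coeff (skip i)) p)))"

definition form_indices :: "(nat \<times> nat \<times> nat set) set" where
  "form_indices = {(s, i, \<omega>). (s = 0 \<and> i = 0 \<and> \<omega> \<subseteq> {..<k})
                     \<or> (s \<in> {1, 2, 3} \<and> i < k \<and> \<omega> \<subseteq> {..<k} \<and> i \<notin> \<omega>)}"

definition vertex_pos :: "nat set \<Rightarrow> nat \<Rightarrow> nat" where
  "vertex_pos \<omega> l = (if l \<in> \<omega> then l else k + l)"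

lemma vertex_pos_less: "l < k \<Longrightarrow> vertex_pos \<omega> l < 2 * k"
  unfolding vertex_pos_def by auto

lemma vertex_coeff_vertex_pos: "l < k \<Longrightarrow> vertex_coeff e \<omega> (vertex_pos \<omega> l) = e l"
  unfolding vertex_coeff_def vertex_pos_def by auto

lemma vertex_coeff_opposite_pos:
  "l < k \<Longrightarrow> l \<in> \<omega> \<longleftrightarrow> l \<notin> \<omega>' \<Longrightarrow> vertex_coeff e \<omega> (vertex_pos \<omega>' l) = 0"
  unfolding vertex_coeff_def vertex_pos_def by auto

lemma shift_coeff_low: "p < 2 * k \<Longrightarrow> 2 * k \<le> B \<Longrightarrow> shift_coeff B e p = 0"
  unfolding shift_coeff_def block_def by auto

lemma form_vec_low:
  "p < 2 * k \<Longrightarrow>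
    form_vec (s, i, \<omega>) p
      = (if s = 0 then vertex_coeff (coeff a) \<omega> p else vertex_coeff (coeff (skip i)) \<omega> p)"
  by (simp add: form_vec_def shift_coeff_low)

lemma coeff_skip_nonzero: "l \<noteq> i \<Longrightarrow> coeff (skip i) l \<noteq> 0"
  using coeff_skip_eq_0_iff by auto

lemma shift_coeff_nonzero:
  assumes "i < k" shows "shift_coeff B (coeff (skip i)) (B + 1) \<noteq> 0"
proof -
  have "coeff a 0 * coeff (skip i) 1 - coeff a 1 * coeff (skip i) 0
      = (int (skip 1) - int (skip 0)) * (int (skip i) - int a)"
    unfolding coeff_def by (simp add: algebra_simps)
  moreover have "skip 1 \<noteq> skip 0" using skip_inj by fastforce
  moreover have "skip i \<noteq> a" by (rule skip_neq)
  ultimately show ?thesis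
    unfolding shift_coeff_def block_def using k2 by auto
qed

lemma exists_other_index: "\<exists>l<k. l \<noteq> i"
  using k2 by (cases "i = 0") (auto intro: exI[of _ 1] exI[of _ 0])

lemma form_vec_vertex_pos_nonzero:
  assumes "l < k" and "s \<noteq> 0 \<Longrightarrow> l \<noteq> i"
  shows "form_vec (s, i, \<omega>) (vertex_pos \<omega> l) \<noteq> 0"
  using assms vertex_pos_less[of l \<omega>]
  by (simp add: form_vec_low vertex_coeff_vertex_pos coeff_a_nonzero coeff_skip_nonzero)

lemma form_vec_opposite_pos:
  "l < k \<Longrightarrow> l \<in> \<omega> \<longleftrightarrow> l \<notin> \<omega>' \<Longrightarrow> form_vec (s, i, \<omega>) (vertex_pos \<omega>' l) = 0"
  using vertex_pos_less[of l \<omega>'] by (simp add: form_vec_low vertex_coeff_opposite_pos)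

lemma form_vec_own_direction: "s \<noteq> 0 \<Longrightarrow> i < k \<Longrightarrow> form_vec (s, i, \<omega>) (vertex_pos \<omega>' i) = 0"
  using vertex_pos_less[of i \<omega>']
  by (simp add: form_vec_low vertex_coeff_def vertex_pos_def coeff_skip_eq_0_iff)

lemma not_collinear_different_vertices:
  assumes "l < k" "l \<in> \<omega> \<longleftrightarrow> l \<notin> \<omega>'" "s \<noteq> 0 \<Longrightarrow> l \<noteq> i" "s' \<noteq> 0 \<Longrightarrow> l \<noteq> i'"
  shows "\<not> collinear_int (4 * k) (form_vec (s, i, \<omega>)) (form_vec (s', i', \<omega>'))"
  using assms vertex_pos_less[of l \<omega>] vertex_pos_less[of l \<omega>']
  by (intro not_collinear_intI[where p = "vertex_pos \<omega>' l" and q = "vertex_pos \<omega> l"])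
    (auto simp: form_vec_opposite_pos form_vec_vertex_pos_nonzero)

lemma not_collinear_weight_form:
  assumes "(s, i, \<omega>) \<in> form_indices" "s \<noteq> 0" "s' \<noteq> 0 \<Longrightarrow> i' \<noteq> i"
  shows "\<not> collinear_int (4 * k) (form_vec (s, i, \<omega>)) (form_vec (s', i', \<omega>'))"
proof -
  have i: "i < k" using assms unfolding form_indices_def by auto
  obtain l where l: "l < k" "l \<noteq> i" using exists_other_index by blast
  have "form_vec (s', i', \<omega>') (vertex_pos \<omega>' i) \<noteq> 0"
    using i assms(3) by (intro form_vec_vertex_pos_nonzero) auto
  then show ?thesis
    using assms i l vertex_pos_less[of i \<omega>'] vertex_pos_less[of l \<omega>]
    by (intro not_collinear_intI[where p = "vertex_pos \<omega>' i" and q = "vertex_pos \<omega> l"])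
      (auto simp: form_vec_own_direction form_vec_vertex_pos_nonzero)
qed

lemma not_collinear_different_shifts:
  assumes "(s, i, \<omega>) \<in> form_indices" "s \<noteq> 0" "s' \<in> {2, 3}" "s \<noteq> s'"
  shows "\<not> collinear_int (4 * k) (form_vec (s, i, \<omega>)) (form_vec (s', i, \<omega>'))"
proof -
  define B where "B = (if s' = 2 then 2 * k else 3 * k)"
  have i: "i < k" "s \<in> {1, 2, 3}" using assms unfolding form_indices_def by auto
  obtain l where l: "l < k" "l \<noteq> i" using exists_other_index by blast
  show ?thesis
  proof (rule not_collinear_intI[where p = "B + 1" and q = "vertex_pos \<omega> l"])
    show "B + 1 < 4 * k" "vertex_pos \<omega> l < 4 * k"
      using k2 l vertex_pos_less[of l \<omega>] unfolding B_def by auto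
    show "form_vec (s, i, \<omega>) (B + 1) = 0"
      using assms i k2 by (auto simp: form_vec_def B_def vertex_coeff_def shift_coeff_def block_def)
    show "form_vec (s', i, \<omega>') (B + 1) \<noteq> 0"
      using assms k2 shift_coeff_nonzero[OF i(1), of B]
      by (auto simp: form_vec_def B_def vertex_coeff_def)
    show "form_vec (s, i, \<omega>) (vertex_pos \<omega> l) \<noteq> 0"
      using l by (rule form_vec_vertex_pos_nonzero)
  qed
qed

lemma form_vec_not_collinear:
  assumes \<iota>: "\<iota> \<in> form_indices" and \<iota>': "\<iota>' \<in> form_indices" and ne: "\<iota> \<noteq> \<iota>'"
  shows "\<not> collinear_int (4 * k) (form_vec \<iota>) (form_vec \<iota>')"
proof -
  obtain s i \<omega> s' i' \<omega>' where eq: "\<iota> = (s, i, \<omega>)" "\<iota>' = (s', i', \<omega>')"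
    by (cases \<iota>, cases \<iota>') auto
  note mem = \<iota>[unfolded eq] \<iota>'[unfolded eq]
  have symm: "\<not> collinear_int (4 * k) (form_vec \<iota>') (form_vec \<iota>) \<Longrightarrow> ?thesis"
    using collinear_int_commute by blast
  have i: "s \<noteq> 0 \<Longrightarrow> i < k \<and> i \<notin> \<omega>" "s' \<noteq> 0 \<Longrightarrow> i' < k \<and> i' \<notin> \<omega>'"
    and \<omega>: "\<omega> \<subseteq> {..<k}" "\<omega>' \<subseteq> {..<k}"
    using mem unfolding form_indices_def by auto
  consider (vertices) "s = s'" "s = 0 \<or> i = i'" | (weight) "s \<noteq> 0" "s' = 0 \<or> i \<noteq> i'"
    | (weight') "s' \<noteq> 0" "s = 0 \<or> i \<noteq> i'" | (shifts) "s \<noteq> s'" "s \<noteq> 0" "s' \<noteq> 0" "i = i'"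
    by auto
  then show ?thesis
  proof cases
    case vertices
    then have "\<omega> \<noteq> \<omega>'" using ne mem eq unfolding form_indices_def by auto
    then obtain l where "l < k" "l \<in> \<omega> \<longleftrightarrow> l \<notin> \<omega>'" using \<omega> by blast
    then show ?thesis
      unfolding eq using vertices i by (intro not_collinear_different_vertices) auto
  next
    case weight
    then show ?thesis unfolding eq using mem by (intro not_collinear_weight_form) auto
  next
    case weight'
    then show ?thesis unfolding eq using mem by (intro symm[unfolded eq] not_collinear_weight_form) auto
  next
    case shifts
    then have mem': "(s, i, \<omega>) \<in> form_indices" "(s', i, \<omega>') \<in> form_indices" using mem by auto
    then have "s' \<in> {2, 3} \<or> s \<in> {2, 3}" using shifts unfolding form_indices_def by auto
    then show ?thesis
      unfolding eq shifts(4)[symmetric]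
      using not_collinear_different_shifts[OF mem'(1) shifts(2) _ shifts(1)]
        not_collinear_different_shifts[OF mem'(2) shifts(3) _ not_sym[OF shifts(1)]]
        collinear_int_commute
      by blast
  qed
qed

definition form_nu :: "nat \<times> nat \<times> nat set \<Rightarrow> (nat \<Rightarrow> int) \<Rightarrow> real" where
  "form_nu \<iota> x = nu ((\<Sum>l<4 * k. form_vec \<iota> l * x l) mod int N)"

lemma form_avg_form_vec:
  "form_avg N (4 * k) nu J form_vec = avg_vecs N (4 * k) (\<lambda>x. \<Prod>\<iota>\<in>J. form_nu \<iota> x)"
  unfolding form_avg_def form_nu_def ..

lemma finite_form_indices: "finite form_indices"
proof -
  have "form_indices \<subseteq> {..3} \<times> {..<k+1} \<times> Pow {..<k}" unfolding form_indices_def by auto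
  then show ?thesis by (rule finite_subset) auto
qed

lemma vertex_coeff_high: "2 * k \<le> p \<Longrightarrow> vertex_coeff e \<omega> p = 0"
  unfolding vertex_coeff_def by auto

lemma abs_vertex_coeff_le: "j \<le> k \<Longrightarrow> \<bar>vertex_coeff (coeff j) \<omega> p\<bar> \<le> int k"
  unfolding vertex_coeff_def using abs_coeff_le by auto

lemma abs_shift_coeff_le:
  assumes "j \<le> k" shows "\<bar>shift_coeff B (coeff j) p\<bar> \<le> int (2 * k * k)"
proof (cases "p \<in> block B")
  case True
  then have "p - B < k" "0 < k" by (auto simp: block_def)
  then have "\<bar>coeff a 0\<bar> * \<bar>coeff j (p - B)\<bar> + \<bar>coeff a (p - B)\<bar> * \<bar>coeff j 0\<bar>
      \<le> int k * int k + int k * int k"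
    using assms a_le_k by (intro add_mono mult_mono) (auto intro: abs_coeff_le)
  then show ?thesis
    using True unfolding shift_coeff_def
    by (auto simp: abs_mult[symmetric] intro: order_trans[OF abs_triangle_ineq4])
qed (simp add: shift_coeff_def)

lemma abs_form_vec_le:
  assumes "(s, i, \<omega>) \<in> form_indices" shows "\<bar>form_vec (s, i, \<omega>) p\<bar> \<le> int (2 * k * k)"
proof -
  have j: "a \<le> k" "s \<noteq> 0 \<Longrightarrow> skip i \<le> k"
    using assms a_le_k skip_le unfolding form_indices_def by auto
  show ?thesis
  proof (cases "p < 2 * k")
    case True
    have "k * 1 \<le> k * (2 * k)" using k2 by (intro mult_le_mono2) simp
    then have "k \<le> 2 * k * k" by (simp add: mult.commute mult.left_commute)
    then have "int k \<le> int (2 * k * k)" using of_nat_le_iff by blast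
    moreover have "\<bar>form_vec (s, i, \<omega>) p\<bar> \<le> int k"
      using True j abs_vertex_coeff_le by (auto simp: form_vec_low)
    ultimately show ?thesis by linarith
  next
    case False
    then show ?thesis
      using j abs_shift_coeff_le by (auto simp: form_vec_def vertex_coeff_high)
  qed
qed

lemma form_vec_nonzero: "\<exists>l<4 * k. form_vec (s, i, \<omega>) l \<noteq> 0"
proof -
  obtain l where "l < k" "l \<noteq> i" using exists_other_index by blast
  then have "form_vec (s, i, \<omega>) (vertex_pos \<omega> l) \<noteq> 0" "vertex_pos \<omega> l < 4 * k"
    using form_vec_vertex_pos_nonzero vertex_pos_less[of l \<omega>] by auto
  then show ?thesis by blast
qed

lemma admissible_form_indices:
  assumes J: "J \<subseteq> form_indices" and card: "card J \<le> gvn_m0 k"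
  shows "admissible_forms (gvn_m0 k) (4 * k) (gvn_L k) J form_vec"
proof -
  have "\<bar>form_vec \<iota> l\<bar> \<le> int (2 * k * k)" "\<exists>l<4 * k. form_vec \<iota> l \<noteq> 0" if "\<iota> \<in> J" for \<iota> l
    using that J abs_form_vec_le form_vec_nonzero by (cases \<iota>; fastforce)+
  then show ?thesis
    unfolding admissible_forms_def gvn_L_def
    using card finite_subset[OF J finite_form_indices] J form_vec_not_collinear by blast
qed

definition forms_avg_bound :: "real \<Rightarrow> bool" where
  "forms_avg_bound \<delta> \<longleftrightarrow>
     (\<forall>J. J \<subseteq> form_indices \<longrightarrow> card J \<le> gvn_m0 k \<longrightarrow> \<bar>form_avg N (4 * k) nu J form_vec - 1\<bar> \<le> \<delta>)"

lemma weight_avg_le: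
  assumes LF: "forms_avg_bound \<delta>" and D: "D \<subseteq> {..<k}" and i: "i < k" "i \<notin> D"
  shows "weight_avg D i \<le> 1 + \<delta>"
proof -
  define J where "J = (\<lambda>\<omega>. (1::nat, i, \<omega>)) ` Pow D"
  have JJ: "J \<subseteq> form_indices" unfolding J_def form_indices_def using D i by auto
  have fD: "finite D" using finite_subset[OF D] by blast
  have cJ: "card J \<le> gvn_m0 k"
  proof -
    have "card J \<le> card (Pow D)" unfolding J_def by (rule card_image_le) (simp add: fD)
    also have "\<dots> = 2 ^ card D" using fD by (simp add: card_Pow)
    also have "\<dots> \<le> 2 ^ k" using card_mono[OF _ D] by (intro power_increasing) auto
    also have "\<dots> \<le> gvn_m0 k" unfolding gvn_m0_def by simp
    finally show ?thesis .
  qed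
  have inj: "inj_on (\<lambda>\<omega>. (1::nat, i, \<omega>)) (Pow D)" by (auto simp: inj_on_def)
  have "(\<Prod>\<iota>\<in>J. form_nu \<iota> x) = (\<Prod>\<omega>\<in>Pow D. nu_form (skip i) (cube_vertex k \<omega> x))" for x
    unfolding J_def prod.reindex[OF inj]
    by (simp add: form_vec_def form_nu_def nu_form_def lform_cube_vertex)
  then have "weight_avg D i = form_avg N (4 * k) nu J form_vec"
    unfolding weight_avg_def form_avg_form_vec by simp
  then show ?thesis using LF[unfolded forms_avg_bound_def, rule_format, OF JJ cJ] by linarith
qed

definition nu_indices :: "(nat \<times> nat \<times> nat set) set" where
  "nu_indices = (\<lambda>\<omega>. (0, 0, \<omega>)) ` Pow {..<k}"

definition weight_indices :: "nat \<Rightarrow> (nat \<times> nat \<times> nat set) set" where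
  "weight_indices t = (\<lambda>(\<omega>, i). (t, i, \<omega>)) ` (SIGMA \<omega>:Pow {..<k}. {..<k} - \<omega>)"

lemma nu_indices_subset: "nu_indices \<subseteq> form_indices"
  unfolding nu_indices_def form_indices_def by auto

lemma weight_indices_subset: "t \<in> {1, 2, 3} \<Longrightarrow> weight_indices t \<subseteq> form_indices"
  unfolding weight_indices_def form_indices_def by auto

lemma finite_nu_indices: "finite nu_indices"
  unfolding nu_indices_def by simp

lemma finite_weight_indices: "finite (weight_indices t)"
  unfolding weight_indices_def by (intro finite_imageI finite_SigmaI) auto

lemma card_nu_indices: "card nu_indices \<le> 2 ^ k"
  unfolding nu_indices_def by (rule order_trans[OF card_image_le]) (simp_all add: card_Pow)

lemma card_weight_indices: "card (weight_indices t) \<le> 2 ^ k * k"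
proof -
  have "card (weight_indices t) \<le> card (SIGMA \<omega>:Pow {..<k}. {..<k} - \<omega>)"
    unfolding weight_indices_def by (rule card_image_le) (auto intro: finite_SigmaI)
  also have "\<dots> \<le> card (Pow {..<k} \<times> {..<k})"
    by (intro card_mono) auto
  also have "\<dots> = 2 ^ k * k"
    by (simp add: card_cartesian_product card_Pow)
  finally show ?thesis .
qed

lemma nu_weight_indices_disjoint: "t \<noteq> 0 \<Longrightarrow> nu_indices \<inter> weight_indices t = {}"
  unfolding nu_indices_def weight_indices_def by auto

lemma weight_indices_disjoint: "t \<noteq> t' \<Longrightarrow> weight_indices t \<inter> weight_indices t' = {}"
  unfolding weight_indices_def by auto

lemma prod_nu_indices: "(\<Prod>\<iota>\<in>nu_indices. form_nu \<iota> x) = nu_box x"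
proof -
  have inj: "inj_on (\<lambda>\<omega>. (0::nat, 0::nat, \<omega>)) (Pow {..<k})" by (auto simp: inj_on_def)
  show ?thesis
    unfolding nu_indices_def prod.reindex[OF inj] nu_box_def
    by (simp add: form_vec_def form_nu_def nu_form_def lform_cube_vertex)
qed

lemma prod_weight_indices:
  assumes "t = 2 \<and> B = 2*k \<or> t = 3 \<and> B = 3*k"
  shows "(\<Prod>\<iota>\<in>weight_indices t. form_nu \<iota> x) = weight_box (shift B x)"
proof -
  have inj: "inj_on (\<lambda>(\<omega>, i). (t, i, \<omega>)) (SIGMA \<omega>:Pow {..<k}. {..<k} - \<omega>)"
    by (auto simp: inj_on_def)
  have BB: "B + k \<le> 4*k" using assms by auto
  have psiv: "form_vec (t, i, \<omega>)
      = (\<lambda>p. vertex_coeff (coeff (skip i)) \<omega> p + shift_coeff B (coeff (skip i)) p)" for i \<omega>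
    using assms by (auto simp: form_vec_def)
  have "(\<Prod>\<iota>\<in>weight_indices t. form_nu \<iota> x)
      = (\<Prod>(\<omega>, i)\<in>(SIGMA \<omega>:Pow {..<k}. {..<k} - \<omega>). form_nu (t, i, \<omega>) x)"
    unfolding weight_indices_def prod.reindex[OF inj] by (simp add: case_prod_beta comp_def)
  also have "\<dots> = (\<Prod>\<omega>\<in>Pow {..<k}. \<Prod>i\<in>{..<k} - \<omega>. form_nu (t, i, \<omega>) x)"
    by (rule prod.Sigma[symmetric]) auto
  also have "\<dots> = weight_box (shift B x)"
    unfolding weight_box_def nu_form_def form_nu_def
    by (intro prod.cong refl) (simp add: psiv lform_cube_vertex_shift[OF BB])
  finally show ?thesis .
qed

lemma forms_avg_bounds:
  assumes LF: "forms_avg_bound \<delta>"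
  shows "\<bar>avg_vecs N (4 * k) nu_box - 1\<bar> \<le> \<delta>"
    and "\<bar>avg_vecs N (4 * k) (\<lambda>x. nu_box x * weight_box (shift (2 * k) x)) - 1\<bar> \<le> \<delta>"
    and "\<bar>avg_vecs N (4 * k) (\<lambda>x. nu_box x * weight_box (shift (3 * k) x)) - 1\<bar> \<le> \<delta>"
    and "\<bar>avg_vecs N (4 * k)
            (\<lambda>x. nu_box x * weight_box (shift (2 * k) x) * weight_box (shift (3 * k) x)) - 1\<bar> \<le> \<delta>"
proof -
  note bound = LF[unfolded forms_avg_bound_def form_avg_form_vec, rule_format]
  define J2 where "J2 = nu_indices \<union> weight_indices 2"
  define J3 where "J3 = nu_indices \<union> weight_indices 3"
  define J23 where "J23 = J2 \<union> weight_indices 3"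
  have m: "2 ^ k + 2 ^ k * k + 2 ^ k * k \<le> gvn_m0 k"
    unfolding gvn_m0_def by (simp add: algebra_simps)
  have "card nu_indices \<le> gvn_m0 k" "card J2 \<le> gvn_m0 k" "card J3 \<le> gvn_m0 k" "card J23 \<le> gvn_m0 k"
    using card_Un_le[of nu_indices "weight_indices 2"] card_Un_le[of nu_indices "weight_indices 3"]
      card_Un_le[of J2 "weight_indices 3"] card_nu_indices card_weight_indices[of 2]
      card_weight_indices[of 3] m
    unfolding J2_def J3_def J23_def by linarith+
  moreover have "nu_indices \<subseteq> form_indices" "J2 \<subseteq> form_indices" "J3 \<subseteq> form_indices"
    "J23 \<subseteq> form_indices"
    using nu_indices_subset weight_indices_subset[of 2] weight_indices_subset[of 3]
    unfolding J2_def J3_def J23_def by auto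
  moreover have "(\<Prod>\<iota>\<in>I \<union> weight_indices t. form_nu \<iota> x)
      = (\<Prod>\<iota>\<in>I. form_nu \<iota> x) * (\<Prod>\<iota>\<in>weight_indices t. form_nu \<iota> x)"
    if "finite I" "I \<inter> weight_indices t = {}" for I t x
    using that finite_weight_indices by (intro prod.union_disjoint) auto
  moreover have "finite J2" "nu_indices \<inter> weight_indices 2 = {}"
    "nu_indices \<inter> weight_indices 3 = {}"
    "J2 \<inter> weight_indices 3 = {}"
    using finite_nu_indices finite_weight_indices nu_weight_indices_disjoint[of 2]
      nu_weight_indices_disjoint[of 3] weight_indices_disjoint[of 2 3]
    unfolding J2_def by auto
  ultimately show "\<bar>avg_vecs N (4 * k) nu_box - 1\<bar> \<le> \<delta>"
    and "\<bar>avg_vecs N (4 * k) (\<lambda>x. nu_box x * weight_box (shift (2 * k) x)) - 1\<bar> \<le> \<delta>"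
    and "\<bar>avg_vecs N (4 * k) (\<lambda>x. nu_box x * weight_box (shift (3 * k) x)) - 1\<bar> \<le> \<delta>"
    and "\<bar>avg_vecs N (4 * k)
            (\<lambda>x. nu_box x * weight_box (shift (2 * k) x) * weight_box (shift (3 * k) x)) - 1\<bar> \<le> \<delta>"
    using bound[of nu_indices] bound[of J2] bound[of J3] bound[of J23] finite_nu_indices
    unfolding J23_def J2_def J3_def by (simp_all add: prod_nu_indices prod_weight_indices)
qed

end

section \<open>The progression average and the Gowers norm as cube averages\<close>

lemma sum_PiE_insert:
  assumes "i \<notin> I"
  shows "(\<Sum>x\<in>PiE (insert i I) (\<lambda>_. Z). F x) = (\<Sum>a\<in>Z. \<Sum>y\<in>PiE I (\<lambda>_. Z). F (y(i := a)))"
proof -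
  have "(\<Sum>x\<in>PiE (insert i I) (\<lambda>_. Z). F x) = (\<Sum>x\<in>(\<lambda>(y, g). g(i := y)) ` (Z \<times> PiE I (\<lambda>_. Z)). F x)"
    by (simp add: PiE_insert_eq)
  also have "\<dots> = (\<Sum>p\<in>Z \<times> PiE I (\<lambda>_. Z). F ((\<lambda>(y, g). g(i := y)) p))"
    by (rule sum.reindex[OF inj_combinator[OF assms], unfolded comp_def])
  also have "\<dots> = (\<Sum>(a, y)\<in>Z \<times> PiE I (\<lambda>_. Z). F (y(i := a)))"
    by (intro sum.cong refl) auto
  also have "\<dots> = (\<Sum>a\<in>Z. \<Sum>y\<in>PiE I (\<lambda>_. Z). F (y(i := a)))"
    by (simp only: sum.cartesian_product)
  finally show ?thesis .
qed

lemma sum_two_coords: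
  fixes Q :: "int \<Rightarrow> int \<Rightarrow> real"
  assumes "i < t" "j < t" "i \<noteq> j"
  shows "(\<Sum>x\<in>ZN_vecs N t. Q (x i) (x j)) = real N ^ (t - 2) * (\<Sum>a\<in>ZN N. \<Sum>b\<in>ZN N. Q a b)"
proof -
  define I0 where "I0 = {0..<t} - {i, j}"
  have eq: "{0..<t} = insert i (insert j I0)" using assms unfolding I0_def by auto
  have n1: "i \<notin> insert j I0" "j \<notin> I0" using assms unfolding I0_def by auto
  have cI0: "card I0 = t - 2" unfolding I0_def using assms by (simp add: card_Diff_subset)
  have "(\<Sum>x\<in>ZN_vecs N t. Q (x i) (x j))
      = (\<Sum>a\<in>ZN N. \<Sum>y\<in>PiE (insert j I0) (\<lambda>_. ZN N). Q a (y j))"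
    unfolding ZN_vecs_def eq sum_PiE_insert[OF n1(1)] using assms by simp
  also have "\<dots> = (\<Sum>a\<in>ZN N. \<Sum>b\<in>ZN N. \<Sum>y\<in>PiE I0 (\<lambda>_. ZN N). Q a b)"
    unfolding sum_PiE_insert[OF n1(2)] by simp
  also have "\<dots> = (\<Sum>a\<in>ZN N. \<Sum>b\<in>ZN N. real N ^ (t - 2) * Q a b)"
  proof -
    have "finite I0" unfolding I0_def by simp
    then show ?thesis by (simp add: card_PiE card_ZN cI0)
  qed
  finally show ?thesis by (simp add: sum_distrib_left)
qed

lemma restrict_PiE_id: "y \<in> PiE A (\<lambda>_. Z) \<Longrightarrow> restrict y A = y"
  by (simp add: PiE_iff extensional_restrict)

lemma sum_restrict:
  assumes "finite B" "A \<inter> B = {}" "finite Z"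
  shows "(\<Sum>y\<in>PiE (A \<union> B) (\<lambda>_. Z). F (restrict y A))
      = real (card Z) ^ card B * (\<Sum>t\<in>PiE A (\<lambda>_. Z). F t)"
  using assms
proof (induction B rule: finite_induct)
  case empty
  then show ?case by (simp add: restrict_PiE_id cong: sum.cong)
next
  case (insert b B)
  have bA: "b \<notin> A \<union> B" using insert by auto
  have "(\<Sum>y\<in>PiE (A \<union> insert b B) (\<lambda>_. Z). F (restrict y A))
      = (\<Sum>c\<in>Z. \<Sum>y\<in>PiE (A \<union> B) (\<lambda>_. Z). F (restrict (y(b := c)) A))"
    using sum_PiE_insert[OF bA, where Z=Z and F="\<lambda>y. F (restrict y A)"] by simp
  also have "\<dots> = (\<Sum>c\<in>Z. \<Sum>y\<in>PiE (A \<union> B) (\<lambda>_. Z). F (restrict y A))"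
    using bA by (intro sum.cong refl) (auto simp: restrict_def intro!: arg_cong[where f=F])
  also have "\<dots> = real (card Z) * (real (card Z) ^ card B * (\<Sum>t\<in>PiE A (\<lambda>_. Z). F t))"
  proof -
    have IH: "(\<Sum>y\<in>PiE (A \<union> B) (\<lambda>_. Z). F (restrict y A))
        = real (card Z) ^ card B * (\<Sum>t\<in>PiE A (\<lambda>_. Z). F t)"
      using insert.IH insert.prems by blast
    show ?thesis unfolding IH by simp
  qed
  finally have fin: "(\<Sum>y\<in>PiE (A \<union> insert b B) (\<lambda>_. Z). F (restrict y A))
      = real (card Z) * (real (card Z) ^ card B * (\<Sum>t\<in>PiE A (\<lambda>_. Z). F t))" .
  have "card (insert b B) = Suc (card B)" using insert(1,2) by simp
  then show ?case unfolding fin by (simp only: power_Suc mult.assoc)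
qed

lemma avg_vecs_two_coords:
  assumes "i < t" "j < t" "i \<noteq> j"
  shows "avg_vecs N t (\<lambda>x. Q (x i) (x j)) = (\<Sum>a\<in>ZN N. \<Sum>b\<in>ZN N. Q a b) / (real N * real N)"
proof -
  have "t = (t - 2) + 2" using assms by arith
  then have "real (N ^ t) = real N ^ (t - 2) * (real N * real N)"
    by (metis of_nat_power power_add power2_eq_square)
  then show ?thesis
    unfolding avg_vecs_def sum_two_coords[OF assms] by (cases "N = 0") auto
qed

lemma avg_vecs_coord_and_prefix:
  assumes "k < t"
  shows "avg_vecs N t (\<lambda>x. \<Phi> (x k) (restrict x {0..<k}))
           = (\<Sum>c\<in>ZN N. \<Sum>y\<in>ZN_vecs N k. \<Phi> c y) / (real N * real N ^ k)"
proof -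
  define I where "I = {0..<k} \<union> {k + 1..<t}"
  have dec: "{0..<t} = insert k I" and k: "k \<notin> I" using assms by (auto simp: I_def)
  have "(\<Sum>x\<in>ZN_vecs N t. \<Phi> (x k) (restrict x {0..<k}))
      = (\<Sum>c\<in>ZN N. \<Sum>y\<in>PiE I (\<lambda>_. ZN N). \<Phi> c (restrict (y(k := c)) {0..<k}))"
    unfolding ZN_vecs_def dec sum_PiE_insert[OF k] by simp
  also have "\<dots> = (\<Sum>c\<in>ZN N. \<Sum>y\<in>PiE I (\<lambda>_. ZN N). \<Phi> c (restrict y {0..<k}))"
    by (simp add: restrict_def cong: if_cong)
  also have "\<dots> = (\<Sum>c\<in>ZN N. real N ^ (t - (k + 1)) * (\<Sum>y\<in>ZN_vecs N k. \<Phi> c y))"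
    unfolding I_def ZN_vecs_def by (subst sum_restrict) auto
  finally have "(\<Sum>x\<in>ZN_vecs N t. \<Phi> (x k) (restrict x {0..<k}))
      = real N ^ (t - (k + 1)) * (\<Sum>c\<in>ZN N. \<Sum>y\<in>ZN_vecs N k. \<Phi> c y)"
    by (simp add: sum_distrib_left)
  moreover have "real (N ^ t) = real N ^ (t - (k + 1)) * (real N * real N ^ k)"
  proof -
    have "t = (t - (k + 1)) + (1 + k)" using assms by arith
    then show ?thesis by (metis of_nat_power power_add power_one_right)
  qed
  ultimately show ?thesis
    unfolding avg_vecs_def by (cases "N = 0") auto
qed

definition ap_avg :: "nat \<Rightarrow> nat \<Rightarrow> (nat \<Rightarrow> int \<Rightarrow> real) \<Rightarrow> real" where
  "ap_avg N k f = (\<Sum>x\<in>ZN N. \<Sum>s\<in>ZN N. \<Prod>j\<le>k. f j ((x + int j * s) mod int N))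
                    / real (card (ZN N \<times> ZN N))"

definition gowers_avg :: "nat \<Rightarrow> nat \<Rightarrow> (int \<Rightarrow> real) \<Rightarrow> real" where
  "gowers_avg N d h = (\<Sum>x\<in>ZN N. \<Sum>t\<in>ZN_vecs N d. \<Prod>S\<in>Pow {0..<d}. h ((x + (\<Sum>i\<in>S. t i)) mod int N))
                        / real (card (ZN N \<times> ZN_vecs N d))"

lemma gowers_norm_eq_root: "gowers_norm N d h = root (2 ^ d) (gowers_avg N d h)"
  unfolding gowers_norm_def gowers_avg_def ..

context gvn_setting
begin

definition ap_prod :: "int \<Rightarrow> int \<Rightarrow> real" where
  "ap_prod X S = (\<Prod>j\<le>k. g j ((X + int j * S) mod int N))"

lemma skip_image: "skip ` {..<k} = {..k} - {a}"
proof
  show "skip ` {..<k} \<subseteq> {..k} - {a}" using skip_le skip_neq by auto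
  show "{..k} - {a} \<subseteq> skip ` {..<k}"
  proof
    fix j assume j: "j \<in> {..k} - {a}"
    show "j \<in> skip ` {..<k}"
    proof (cases "j < a")
      case True then have "skip j = j" "j < k" using a_le_k by (auto simp: skip_def)
      then show ?thesis by (metis image_eqI lessThan_iff)
    next
      case False then have "j > a" using j by auto
      then have "skip (j - 1) = j" "j - 1 < k" using j by (auto simp: skip_def)
      then show ?thesis by (metis image_eqI lessThan_iff)
    qed
  qed
qed

lemma prod_atMost_skip: "(\<Prod>j\<le>k. h j) = h a * (\<Prod>l<k. h (skip l))"
proof -
  have "{..k} = insert a (skip ` {..<k})" using skip_image a_le_k by auto
  moreover have "a \<notin> skip ` {..<k}" using skip_neq by (metis imageE)
  moreover have "inj_on skip {..<k}" using skip_inj by (auto simp: inj_on_def)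
  ultimately show ?thesis by (simp add: prod.reindex)
qed

text \<open>\<open>(ap_start x, ap_step x)\<close> is the substitution behind \<open>coeff\<close>, with \<open>y l = x (k + l)\<close>.\<close>

definition ap_start :: "(nat \<Rightarrow> int) \<Rightarrow> int" where
  "ap_start x = (\<Sum>l<k. int (skip l) * x (k + l))"

definition ap_step :: "(nat \<Rightarrow> int) \<Rightarrow> int" where
  "ap_step x = - (\<Sum>l<k. x (k + l))"

lemma cube_term_empty:
  "(\<Prod>\<omega>\<in>Pow {}. cube_term {} \<omega> x) = ap_prod (ap_start x mod int N) (ap_step x mod int N)"
proof -
  have "((X mod int N) + int j * (S mod int N)) mod int N = (X + int j * S) mod int N" for X S j
    by (metis mod_add_left_eq mod_add_right_eq mod_mult_right_eq)
  moreover have "ap_start x + int j * ap_step x = lform (coeff j) (cube_vertex k {} x)" for j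
    unfolding ap_start_def ap_step_def lform_def coeff_def cube_vertex_def
    by (simp add: sum_distrib_left sum_subtractf[symmetric] algebra_simps)
  ultimately have "ap_prod (ap_start x mod int N) (ap_step x mod int N)
      = (\<Prod>j\<le>k. g_form j (cube_vertex k {} x))"
    unfolding ap_prod_def g_form_def by simp
  also have "\<dots> = cube_term {} {} x"
    unfolding prod_atMost_skip cube_term_def by simp
  finally show ?thesis by simp
qed

lemma k_less_N: "k < N"
proof -
  have "k * 1 \<le> k * (2 * k)" using k2 by (intro mult_le_mono2) simp
  then have "k \<le> 2 * k * k" by (simp add: mult.commute mult.left_commute)
  then show ?thesis using N_large by linarith
qed

lemma abs_less_N_not_dvd: "z \<noteq> 0 \<Longrightarrow> \<bar>z\<bar> \<le> int k \<Longrightarrow> \<not> int N dvd z"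
  using dvd_imp_le_int[of z "int N"] k_less_N by auto

lemma ap_start_split:
  "ap_start x
      = int (skip 0) * x k + int (skip 1) * x (k + 1) + (\<Sum>l\<in>{2..<k}. int (skip l) * x (k + l))"
proof -
  have "{..<k} = insert 0 (insert 1 {2..<k})" using k2 by auto
  then show ?thesis unfolding ap_start_def by simp
qed

lemma ap_step_split: "ap_step x = - (x k + x (k + 1) + (\<Sum>l\<in>{2..<k}. x (k + l)))"
proof -
  have "{..<k} = insert 0 (insert 1 {2..<k})" using k2 by auto
  then show ?thesis unfolding ap_step_def by simp
qed

text \<open>\<open>(x k, x (k + 1))\<close> is replaced by \<open>(ap_start x, ap_step x)\<close>; modulo the prime \<open>N\<close> this is
  an invertible affine change of these two coordinates, with determinant \<open>skip 1 - skip 0\<close>.\<close>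

definition ap_reparam :: "(nat \<Rightarrow> int) \<Rightarrow> nat \<Rightarrow> int" where
  "ap_reparam x = x(k := ap_start x mod int N, k + 1 := ap_step x mod int N)"

lemma ap_reparam_in: "x \<in> ZN_vecs N (4 * k) \<Longrightarrow> ap_reparam x \<in> ZN_vecs N (4 * k)"
  using k2 N_pos unfolding ap_reparam_def ZN_vecs_def PiE_def Pi_def extensional_def
  by (auto intro: mod_in_ZN)

lemma inj_on_ap_reparam: "inj_on ap_reparam (ZN_vecs N (4 * k))"
proof (rule inj_onI)
  fix x y assume x: "x \<in> ZN_vecs N (4 * k)" and y: "y \<in> ZN_vecs N (4 * k)"
    and e: "ap_reparam x = ap_reparam y"
  have other: "x l = y l" if "l \<noteq> k" "l \<noteq> k + 1" for l
    using fun_cong[OF e, of l] that by (simp add: ap_reparam_def)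
  have "int N dvd ap_start x - ap_start y" "int N dvd ap_step x - ap_step y"
    using fun_cong[OF e, of k] fun_cong[OF e, of "k + 1"]
    by (simp_all add: ap_reparam_def mod_eq_dvd_iff)
  moreover have "(\<Sum>l\<in>{2..<k}. int (skip l) * x (k + l)) = (\<Sum>l\<in>{2..<k}. int (skip l) * y (k + l))"
    "(\<Sum>l\<in>{2..<k}. x (k + l)) = (\<Sum>l\<in>{2..<k}. y (k + l))"
    using other by (auto intro!: sum.cong)
  ultimately have "int N dvd int (skip 0) * (x k - y k) + int (skip 1) * (x (k + 1) - y (k + 1))"
    "int N dvd (x k - y k) + (x (k + 1) - y (k + 1))"
    unfolding ap_start_split ap_step_split
    by (simp_all add: algebra_simps dvd_diff_commute[of _ "x k + _"])
  moreover have "\<not> int N dvd int (skip 0) - int (skip 1)"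
    using skip_inj[of 0 1] skip_le[of 0] skip_le[of 1] k2 by (intro abs_less_N_not_dvd) auto
  moreover have "prime (int N)" using prime by simp
  ultimately have "int N dvd x k - y k" "int N dvd x (k + 1) - y (k + 1)"
    using prime_dvd_pair by blast+
  moreover have "k < 4 * k" "k + 1 < 4 * k" using k2 by auto
  ultimately have "x k = y k" "x (k + 1) = y (k + 1)"
    using ZN_eq_of_dvd ZN_vecs_memD[OF x] ZN_vecs_memD[OF y] by blast+
  then show "x = y" using other by (metis ext)
qed

lemma ap_avg_eq_cube_avg_empty: "ap_avg N k g = cube_avg {}"
proof -
  have "cube_avg {} = avg_vecs N (4 * k) (\<lambda>x. ap_prod (ap_start x mod int N) (ap_step x mod int N))"
    unfolding cube_avg_def cube_term_empty ..
  also have "\<dots> = avg_vecs N (4 * k) (\<lambda>x. ap_prod (x k) (x (k + 1)))"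
    using avg_vecs_reindex[OF ap_reparam_in inj_on_ap_reparam, of "\<lambda>x. ap_prod (x k) (x (k + 1))"]
      k2
    by (simp add: ap_reparam_def)
  also have "\<dots> = (\<Sum>X\<in>ZN N. \<Sum>S\<in>ZN N. ap_prod X S) / (real N * real N)"
    using k2 by (intro avg_vecs_two_coords) auto
  also have "\<dots> = ap_avg N k g"
    unfolding ap_avg_def ap_prod_def by (simp add: card_cartesian_product)
  finally show ?thesis by simp
qed

lemma coeff_a_not_dvd: "l < k \<Longrightarrow> \<not> int N dvd coeff a l"
  using abs_less_N_not_dvd coeff_a_nonzero abs_coeff_le a_le_k by blast

text \<open>Under this change of variables the form of \<open>g a\<close> at the vertex \<open>\<omega>\<close> of the cube
  becomes \<open>x k + (\<Sum>l\<in>\<omega>. x l)\<close>, the corresponding vertex of a Gowers box.\<close>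

definition gowers_reparam :: "(nat \<Rightarrow> int) \<Rightarrow> nat \<Rightarrow> int" where
  "gowers_reparam x l = (if l < k then coeff a l * (x l - x (k + l)) mod int N
                         else if l = k then lform (coeff a) (\<lambda>l. x (k + l)) mod int N
                         else x l)"

definition gowers_integrand :: "int \<Rightarrow> (nat \<Rightarrow> int) \<Rightarrow> real" where
  "gowers_integrand c y = (\<Prod>S\<in>Pow {0..<k}. g a ((c + (\<Sum>i\<in>S. y i)) mod int N))"

lemma gowers_reparam_in: "x \<in> ZN_vecs N (4 * k) \<Longrightarrow> gowers_reparam x \<in> ZN_vecs N (4 * k)"
  unfolding ZN_vecs_def PiE_iff gowers_reparam_def extensional_def using N_pos k2
  by (auto intro: mod_in_ZN)

lemma inj_on_gowers_reparam: "inj_on gowers_reparam (ZN_vecs N (4 * k))"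
proof (rule inj_onI)
  fix x y assume x: "x \<in> ZN_vecs N (4 * k)" and y: "y \<in> ZN_vecs N (4 * k)"
    and e: "gowers_reparam x = gowers_reparam y"
  have mem: "x l \<in> ZN N" "y l \<in> ZN N" if "l < 4 * k" for l
    using x y that by (auto intro: ZN_vecs_memD)
  have high: "x l = y l" if "k < l" for l
    using fun_cong[OF e, of l] that by (simp add: gowers_reparam_def)
  have "{..<k} = insert 0 {1..<k}" using k2 by auto
  then have "lform (coeff a) (\<lambda>l. x (k + l)) - lform (coeff a) (\<lambda>l. y (k + l))
      = coeff a 0 * (x k - y k)"
    unfolding lform_def using high by (simp add: algebra_simps)
  moreover have "int N dvd lform (coeff a) (\<lambda>l. x (k + l)) - lform (coeff a) (\<lambda>l. y (k + l))"
    using fun_cong[OF e, of k] by (simp add: gowers_reparam_def mod_eq_dvd_iff)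
  ultimately have "int N dvd coeff a 0 * (x k - y k)"
    by simp
  then have "x k = y k"
    using ZN_eq_of_dvd_mult[OF prime coeff_a_not_dvd[of 0]] mem[of k] k2 by simp
  then have upper: "x (k + l) = y (k + l)" for l
    using high[of "k + l"] by (cases l) auto
  have "x l = y l" if "l < k" for l
  proof -
    have "int N dvd coeff a l * (x l - x (k + l)) - coeff a l * (y l - y (k + l))"
      using fun_cong[OF e, of l] that by (simp add: gowers_reparam_def mod_eq_dvd_iff)
    then show ?thesis
      using ZN_eq_of_dvd_mult[OF prime coeff_a_not_dvd[OF that]] mem[of l] that
      by (simp add: upper algebra_simps)
  qed
  then show "x = y"
    using upper high by (metis ext le_add_diff_inverse not_less)
qed

lemma lform_cube_vertex_split:
  assumes "\<omega> \<subseteq> {..<k}"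
  shows "lform e (cube_vertex k \<omega> x) = lform e (\<lambda>l. x (k + l)) + (\<Sum>l\<in>\<omega>. e l * (x l - x (k + l)))"
proof -
  have "lform e (cube_vertex k \<omega> x)
      = (\<Sum>l<k. e l * x (k + l) + (if l \<in> \<omega> then e l * (x l - x (k + l)) else 0))"
    unfolding lform_def cube_vertex_def by (intro sum.cong) (auto simp: algebra_simps)
  also have "\<dots> = lform e (\<lambda>l. x (k + l)) + (\<Sum>l\<in>\<omega>. e l * (x l - x (k + l)))"
    using assms by (simp add: lform_def sum.distrib sum.inter_restrict[symmetric] Int_absorb1)
  finally show ?thesis .
qed

lemma gowers_integrand_reparam:
  "gowers_integrand (gowers_reparam x k) (restrict (gowers_reparam x) {0..<k}) = g_box x"
  unfolding gowers_integrand_def g_box_def g_form_def lessThan_atLeast0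
proof (intro prod.cong refl)
  fix \<omega> assume \<omega>: "\<omega> \<in> Pow {0..<k}"
  then have "(\<Sum>i\<in>\<omega>. restrict (gowers_reparam x) {0..<k} i)
      = (\<Sum>l\<in>\<omega>. coeff a l * (x l - x (k + l)) mod int N)"
    by (intro sum.cong) (auto simp: gowers_reparam_def)
  moreover have "lform (coeff a) (cube_vertex k \<omega> x)
      = lform (coeff a) (\<lambda>l. x (k + l)) + (\<Sum>l\<in>\<omega>. coeff a l * (x l - x (k + l)))"
    using \<omega> lform_cube_vertex_split[of \<omega>] by (simp add: lessThan_atLeast0)
  ultimately show
    "g a ((gowers_reparam x k + (\<Sum>i\<in>\<omega>. restrict (gowers_reparam x) {0..<k} i)) mod int N)
      = g a (lform (coeff a) (cube_vertex k \<omega> x) mod int N)"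
    by (simp add: gowers_reparam_def mod_add_sum_mod)
qed

lemma g_box_avg_eq_gowers_avg: "g_box_avg = gowers_avg N k (g a)"
proof -
  have "g_box_avg = avg_vecs N (4 * k) (\<lambda>x. gowers_integrand (x k) (restrict x {0..<k}))"
    unfolding g_box_avg_def gowers_integrand_reparam[symmetric]
    by (rule avg_vecs_reindex[OF gowers_reparam_in inj_on_gowers_reparam])
  also have "\<dots> = (\<Sum>c\<in>ZN N. \<Sum>y\<in>ZN_vecs N k. gowers_integrand c y) / (real N * real N ^ k)"
    using avg_vecs_coord_and_prefix[where \<Phi> = gowers_integrand and t = "4 * k" and k = k] k2 by simp
  also have "\<dots> = gowers_avg N k (g a)"
    unfolding gowers_avg_def gowers_integrand_def by (simp add: card_cartesian_product)
  finally show ?thesis .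
qed

end

section \<open>The bound for one large prime\<close>

lemma power_add_le_power_add:
  fixes x y :: real
  assumes "0 \<le> x" "0 \<le> y" "n \<ge> 1"
  shows "x ^ n + y ^ n \<le> (x + y) ^ n"
  using assms(3)
proof (induction n rule: dec_induct)
  case (step n)
  have "x ^ Suc n + y ^ Suc n \<le> (x + y) * x ^ n + (x + y) * y ^ n"
    unfolding power_Suc using assms by (intro add_mono mult_right_mono) auto
  also have "\<dots> = (x + y) * (x ^ n + y ^ n)"
    by (simp add: algebra_simps)
  also have "\<dots> \<le> (x + y) * (x + y) ^ n"
    using step.IH assms by (intro mult_left_mono) auto
  finally show ?case by simp
qed simp

lemma real_root_add_le:
  assumes "n > 0" "0 \<le> x" "0 \<le> y"
  shows "root n (x + y) \<le> root n x + root n y"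
proof -
  have "x + y \<le> (root n x + root n y) ^ n"
    using power_add_le_power_add[of "root n x" "root n y" n] assms by (simp add: real_root_pow_pos2)
  then have "root n (x + y) \<le> root n ((root n x + root n y) ^ n)"
    using assms by (simp add: real_root_le_iff)
  also have "\<dots> = root n x + root n y"
    using assms by (intro real_root_power_cancel) auto
  finally show ?thesis .
qed

lemma real_root_le_self:
  assumes "n > 0" "1 \<le> x"
  shows "root n x \<le> x"
proof -
  have "root n x \<le> root n (x ^ n)"
    using assms by (simp add: real_root_le_iff self_le_power)
  also have "\<dots> = x"
    using assms by (intro real_root_power_cancel) auto
  finally show ?thesis .
qed

lemma root_power_bound:
  assumes n: "n > 0" and \<delta>: "0 \<le> \<delta>" "\<delta> \<le> 1" and U: "0 \<le> U" "U \<le> 2" and \<eta>: "0 \<le> \<eta>"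
    and T: "\<bar>T\<bar> ^ n \<le> (1 + \<delta>) ^ n * (U + \<eta>)"
  shows "\<bar>T\<bar> \<le> root n U + 2 * \<delta> + 2 * root n \<eta>"
proof -
  have "\<bar>T\<bar> = root n (\<bar>T\<bar> ^ n)"
    using n by (simp add: real_root_power_cancel)
  also have "\<dots> \<le> root n ((1 + \<delta>) ^ n * (U + \<eta>))"
    using n T by (simp add: real_root_le_iff)
  also have "\<dots> = (1 + \<delta>) * root n (U + \<eta>)"
    using n \<delta> by (simp add: real_root_mult real_root_power_cancel)
  also have "\<dots> \<le> (1 + \<delta>) * (root n U + root n \<eta>)"
    using real_root_add_le[OF n U(1) \<eta>] \<delta> by (intro mult_left_mono) auto
  also have "\<dots> = root n U + \<delta> * root n U + (1 + \<delta>) * root n \<eta>"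
    by (simp add: algebra_simps)
  also have "\<dots> \<le> root n U + \<delta> * 2 + 2 * root n \<eta>"
  proof -
    have "root n U \<le> 2"
      using real_root_le_iff[OF n, of U 2] real_root_le_self[OF n, of 2] U by linarith
    then show ?thesis
      using \<delta> \<eta> n by (intro add_mono mult_left_mono mult_right_mono) auto
  qed
  finally show ?thesis by simp
qed

definition vn_error :: "nat \<Rightarrow> real \<Rightarrow> real" where
  "vn_error k \<delta> = 2 * \<delta> + 2 * root (2 ^ k) (sqrt ((1 + \<delta>) * (4 * \<delta>)))"

context gvn_setting
begin

lemma g_box_avg_nonneg: "0 \<le> g_box_avg"
proof -
  interpret trivial_weights: cs_cube N k "4 * k" "g_form a" "\<lambda>_ _. 1" "\<lambda>_ _. 1"
    by unfold_locales auto
  have "trivial_weights.cube_avg {..<k} = g_box_avg"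
    unfolding trivial_weights.cube_avg_def trivial_weights.cube_term_def g_box_avg_def g_box_def
    by simp
  then show ?thesis
    using trivial_weights.cube_avg_nonneg[of k] k2 by simp
qed

lemma g_box_avg_le: "forms_avg_bound \<delta> \<Longrightarrow> g_box_avg \<le> 1 + \<delta>"
proof -
  assume "forms_avg_bound \<delta>"
  have "g_box_avg \<le> avg_vecs N (4 * k) nu_box"
    unfolding g_box_avg_def by (rule avg_vecs_mono) (use abs_g_box_le in \<open>auto simp: abs_le_iff\<close>)
  also have "\<dots> \<le> 1 + \<delta>"
    using forms_avg_bounds(1)[OF \<open>forms_avg_bound \<delta>\<close>] by linarith
  finally show ?thesis .
qed

lemma gowers_avg_nonneg: "0 \<le> gowers_avg N k (g a)"
  using g_box_avg_nonneg g_box_avg_eq_gowers_avg by simp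

lemma abs_ap_avg_le:
  assumes LF: "forms_avg_bound \<delta>" and \<delta>: "0 \<le> \<delta>" "\<delta> \<le> 1"
  shows "\<bar>ap_avg N k g\<bar> \<le> gowers_norm N k (g a) + vn_error k \<delta>"
proof -
  define \<eta> where "\<eta> = sqrt ((1 + \<delta>) * (4 * \<delta>))"
  have "\<bar>cube_avg {..<k} - g_box_avg\<bar> \<le> \<eta>"
    unfolding \<eta>_def using cube_avg_all_deviation_bound[OF \<delta>(1) forms_avg_bounds[OF LF]]
    by (simp add: real_le_rsqrt)
  then have full: "\<bar>cube_avg {..<k}\<bar> \<le> g_box_avg + \<eta>"
    using cube_avg_nonneg[of k] k2 by linarith
  have "\<bar>cube_avg {}\<bar> ^ (2 ^ k) \<le> (1 + \<delta>) ^ (2 ^ k - 1) * \<bar>cube_avg {..<k}\<bar>"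
    using cube_avg_power_le[of "1 + \<delta>" k] weight_avg_le[OF LF] by auto
  also have "\<dots> \<le> (1 + \<delta>) ^ (2 ^ k) * (g_box_avg + \<eta>)"
    using full \<delta> g_box_avg_nonneg
    by (intro mult_mono power_increasing) (auto simp: \<eta>_def)
  finally have "\<bar>cube_avg {}\<bar> \<le> root (2 ^ k) g_box_avg + 2 * \<delta> + 2 * root (2 ^ k) \<eta>"
    using g_box_avg_nonneg g_box_avg_le[OF LF] \<delta> by (intro root_power_bound) (auto simp: \<eta>_def)
  then show ?thesis
    unfolding ap_avg_eq_cube_avg_empty gowers_norm_eq_root g_box_avg_eq_gowers_avg[symmetric]
      vn_error_def \<eta>_def by simp
qed

end

lemma ap_avg_half: "ap_avg N k (\<lambda>j x. f j x / 2) = ap_avg N k f / 2 ^ (k + 1)"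
proof -
  have "(\<Prod>j\<le>k. h j / 2) = (\<Prod>j\<le>k. h j) / 2 ^ (k + 1)" for h :: "nat \<Rightarrow> real"
    by (simp add: prod_dividef)
  then show ?thesis
    unfolding ap_avg_def by (simp add: sum_divide_distrib mult.commute)
qed

lemma gowers_norm_half: "gowers_norm N d (\<lambda>x. h x / 2) = gowers_norm N d h / 2"
proof -
  have "(\<Prod>S\<in>Pow {0..<d}. u S / 2) = (\<Prod>S\<in>Pow {0..<d}. u S) / 2 ^ (2 ^ d)" for u :: "nat set \<Rightarrow> real"
    by (simp add: prod_dividef card_Pow)
  then have "gowers_avg N d (\<lambda>x. h x / 2) = gowers_avg N d h / 2 ^ (2 ^ d)"
    unfolding gowers_avg_def by (simp add: sum_divide_distrib mult.commute)
  moreover have "root (2 ^ d) ((2::real) ^ (2 ^ d)) = 2"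
    by (intro real_root_power_cancel) auto
  ultimately show ?thesis
    unfolding gowers_norm_eq_root by (simp add: real_root_divide)
qed

lemma abs_ap_avg_le_gowers_norm:
  fixes f :: "nat \<Rightarrow> int \<Rightarrow> real" and \<nu> :: "int \<Rightarrow> real"
  assumes N: "prime N" "N > 2 * k * k" and k: "k \<ge> 2" and a: "a \<le> k"
    and \<nu>: "\<And>x. x \<in> ZN N \<Longrightarrow> 0 \<le> \<nu> x" and f: "\<forall>j\<le>k. \<forall>x\<in>ZN N. \<bar>f j x\<bar> \<le> 1 + \<nu> x"
    and \<delta>: "0 \<le> \<delta>" "\<delta> \<le> 1"
    and LF: "\<And>(J :: (nat \<times> nat \<times> nat set) set) \<psi>.
               admissible_forms (gvn_m0 k) (4 * k) (gvn_L k) J \<psi> \<Longrightarrow>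
               \<bar>form_avg N (4 * k) (\<lambda>z. (1 + \<nu> z) / 2) J \<psi> - 1\<bar> \<le> \<delta>"
  shows "\<bar>ap_avg N k f\<bar> \<le> 2 ^ (k + 1) * gowers_norm N k (f a) + 2 ^ (k + 1) * vn_error k \<delta>"
proof -
  interpret S: gvn_setting N k a "\<lambda>x. (1 + \<nu> x) / 2" "\<lambda>j x. f j x / 2"
    using N k a \<nu> f by unfold_locales auto
  have "S.forms_avg_bound \<delta>"
    unfolding S.forms_avg_bound_def using LF S.admissible_form_indices by blast
  from S.abs_ap_avg_le[OF this \<delta>]
  have "\<bar>ap_avg N k f\<bar> / 2 ^ (k + 1) \<le> gowers_norm N k (f a) / 2 + vn_error k \<delta>"
    by (simp add: ap_avg_half gowers_norm_half)
  then have "\<bar>ap_avg N k f\<bar> \<le> 2 ^ (k + 1) * (gowers_norm N k (f a) / 2 + vn_error k \<delta>)"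
    by (simp add: field_simps)
  also have "\<dots> \<le> 2 ^ (k + 1) * (gowers_norm N k (f a) + vn_error k \<delta>)"
  proof -
    have "0 \<le> gowers_norm N k (\<lambda>x. f a x / 2)"
      unfolding gowers_norm_eq_root using S.gowers_avg_nonneg by simp
    then show ?thesis by (intro mult_left_mono) (simp_all add: gowers_norm_half)
  qed
  finally show ?thesis
    by (simp add: distrib_left)
qed

lemma vn_error_small: "e > 0 \<Longrightarrow> \<exists>\<delta>. 0 < \<delta> \<and> \<delta> \<le> 1 \<and> 2 ^ (k + 1) * vn_error k \<delta> < e"
proof -
  assume e: "e > 0"
  have "((\<lambda>\<delta>. 2 ^ (k + 1) * vn_error k \<delta>) \<longlongrightarrow> 2 ^ (k + 1) * vn_error k 0) (at_right 0)"
    unfolding vn_error_def by (intro tendsto_intros)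
  then have "eventually (\<lambda>\<delta>. 2 ^ (k + 1) * vn_error k \<delta> < e) (at_right 0)"
    using e by (intro order_tendstoD(2)) (auto simp: vn_error_def)
  then obtain b where "b > 0" "\<forall>\<delta>>0. \<delta> < b \<longrightarrow> 2 ^ (k + 1) * vn_error k \<delta> < e"
    unfolding eventually_at_right_field by auto
  then show ?thesis by (intro exI[of _ "min (b / 2) 1"]) auto
qed

lemma ap_avg_bound_eventually:
  assumes k: "k \<ge> 2" and lf: "linear_forms_condition (gvn_m0 k) (4 * k) (gvn_L k) \<nu>"
    and \<nu>: "\<And>N x. prime N \<Longrightarrow> x \<in> ZN N \<Longrightarrow> 0 \<le> \<nu> N x" and e: "e > 0"
  shows "\<exists>N0. \<forall>N. prime N \<and> N \<ge> N0 \<longrightarrow> (\<forall>f\<in>{f. \<forall>j\<le>k. \<forall>x\<in>ZN N. \<bar>f j x\<bar> \<le> 1 + \<nu> N x}.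
     \<bar>ap_avg N k f\<bar> \<le> 2 ^ (k + 1) * (MIN j\<in>{0..k}. gowers_norm N k (f j)) + e)"
proof -
  obtain \<delta> where \<delta>: "0 < \<delta>" "\<delta> \<le> 1" "2 ^ (k + 1) * vn_error k \<delta> < e"
    using vn_error_small[OF e] by blast
  obtain N0 where N0: "\<forall>N. prime N \<and> N \<ge> N0 \<longrightarrow>
      (\<forall>(J :: (nat \<times> nat \<times> nat set) set) \<psi>. admissible_forms (gvn_m0 k) (4 * k) (gvn_L k) J \<psi> \<longrightarrow>
        \<bar>form_avg N (4 * k) (\<lambda>z. (1 + \<nu> N z) / 2) J \<psi> - 1\<bar> \<le> \<delta>)"
    using linear_forms_condition_half_shift[OF lf \<delta>(1)] by blast
  show ?thesis
  proof (intro exI[of _ "max N0 (2 * k * k + 1)"] allI impI ballI)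
    fix N f
    assume N: "prime N \<and> max N0 (2 * k * k + 1) \<le> N"
      and "f \<in> {f. \<forall>j\<le>k. \<forall>x\<in>ZN N. \<bar>f j x\<bar> \<le> 1 + \<nu> N x}"
    then have f: "\<forall>j\<le>k. \<forall>x\<in>ZN N. \<bar>f j x\<bar> \<le> 1 + \<nu> N x" by simp
    have "(MIN j\<in>{0..k}. gowers_norm N k (f j)) \<in> (\<lambda>j. gowers_norm N k (f j)) ` {0..k}"
      by (intro Min_in) auto
    then obtain a where a: "a \<in> {0..k}" "(MIN j\<in>{0..k}. gowers_norm N k (f j)) = gowers_norm N k (f a)"
      by blast
    have "\<bar>ap_avg N k f\<bar> \<le> 2 ^ (k + 1) * gowers_norm N k (f a) + 2 ^ (k + 1) * vn_error k \<delta>"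
      using N N0 a(1) k \<nu> f \<delta> by (intro abs_ap_avg_le_gowers_norm) auto
    then show "\<bar>ap_avg N k f\<bar> \<le> 2 ^ (k + 1) * (MIN j\<in>{0..k}. gowers_norm N k (f j)) + e"
      unfolding a(2) using \<delta>(3) by linarith
  qed
qed

text \<open>Take for \<open>eps N\<close> the supremum of the excess \<open>F N f - G N f\<close> over the family.\<close>

lemma vanishing_error_function:
  fixes F G :: "nat \<Rightarrow> 'f \<Rightarrow> real"
  assumes bdd: "\<And>N. P N \<Longrightarrow> \<exists>B. \<forall>f\<in>A N. F N f - G N f \<le> B"
    and small: "\<And>e. e > 0 \<Longrightarrow> \<exists>N0. \<forall>N. P N \<and> N \<ge> N0 \<longrightarrow> (\<forall>f\<in>A N. F N f \<le> G N f + e)"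
  shows "\<exists>eps. (\<forall>N. eps N \<ge> 0) \<and> (\<forall>e>0. \<exists>N0. \<forall>N. P N \<and> N \<ge> N0 \<longrightarrow> eps N < e)
    \<and> (\<forall>N f. P N \<longrightarrow> f \<in> A N \<longrightarrow> F N f \<le> G N f + eps N)"
proof -
  define D where "D N = insert 0 ((\<lambda>f. F N f - G N f) ` A N)" for N
  define eps where "eps N = (if P N then Sup (D N) else 0)" for N
  have bdd': "bdd_above (D N)" if PN: "P N" for N
  proof -
    obtain B where "\<forall>f\<in>A N. F N f - G N f \<le> B" using bdd[OF PN] by blast
    then show ?thesis unfolding D_def by (intro bdd_aboveI[of _ "max 0 B"]) auto
  qed
  have "eps N \<ge> 0" for N
    unfolding eps_def D_def using cSup_upper[OF insertI1 bdd'[unfolded D_def]] by simp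
  moreover have "\<exists>N0. \<forall>N. P N \<and> N \<ge> N0 \<longrightarrow> eps N < e" if "e > 0" for e
  proof -
    obtain N0 where N0: "\<forall>N. P N \<and> N \<ge> N0 \<longrightarrow> (\<forall>f\<in>A N. F N f \<le> G N f + e / 2)"
      using small[of "e / 2"] \<open>e > 0\<close> by auto
    have "eps N < e" if "P N" "N \<ge> N0" for N
    proof -
      have "Sup (D N) \<le> e / 2"
        unfolding D_def using N0 that \<open>e > 0\<close> by (intro cSup_least) force+
      then show ?thesis unfolding eps_def using that \<open>e > 0\<close> by simp
    qed
    then show ?thesis by blast
  qed
  moreover have "F N f \<le> G N f + eps N" if "P N" "f \<in> A N" for N f
    using that cSup_upper[of "F N f - G N f" "D N"] bdd' unfolding eps_def D_def by force
  ultimately show ?thesis by blast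
qed

lemma abs_prod_le_prod: "(\<And>j. j \<in> A \<Longrightarrow> \<bar>u j\<bar> \<le> w j) \<Longrightarrow> \<bar>\<Prod>j\<in>A. u j\<bar> \<le> (\<Prod>j\<in>A. (w j :: real))"
  unfolding abs_prod by (intro prod_mono) auto

lemma abs_root_le: "n > 0 \<Longrightarrow> \<bar>root n x\<bar> \<le> 1 + \<bar>x\<bar>"
proof -
  assume n: "n > 0"
  have "root n \<bar>x\<bar> \<le> root n ((1 + \<bar>x\<bar>) ^ n)"
    using n by (simp add: real_root_le_iff order_trans[OF _ self_le_power])
  also have "\<dots> = 1 + \<bar>x\<bar>"
    using n by (intro real_root_power_cancel) auto
  finally show ?thesis using real_root_abs[OF n] by simp
qed

lemma abs_ap_avg_le:
  assumes "N > 0" "\<forall>j\<le>k. \<forall>x\<in>ZN N. \<bar>f j x\<bar> \<le> w x"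
  shows "\<bar>ap_avg N k f\<bar> \<le> ap_avg N k (\<lambda>_. w)"
  unfolding ap_avg_def using assms
  by (auto simp: abs_divide intro!: divide_right_mono order_trans[OF sum_abs]
    sum_mono abs_prod_le_prod mod_in_ZN)

lemma abs_gowers_norm_le:
  assumes "N > 0" "\<forall>x\<in>ZN N. \<bar>h x\<bar> \<le> w x"
  shows "\<bar>gowers_norm N d h\<bar> \<le> 1 + gowers_avg N d w"
proof -
  have "\<bar>gowers_avg N d h\<bar> \<le> gowers_avg N d w"
    unfolding gowers_avg_def using assms
    by (auto simp: abs_divide intro!: divide_right_mono order_trans[OF sum_abs]
      sum_mono abs_prod_le_prod mod_in_ZN)
  then show ?thesis
    unfolding gowers_norm_eq_root using abs_root_le[of "2 ^ d" "gowers_avg N d h"] by simp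
qed

lemma ap_avg_minus_gowers_bounded:
  assumes "N > 0"
  shows "\<exists>B. \<forall>f. (\<forall>j\<le>k. \<forall>x\<in>ZN N. \<bar>f j x\<bar> \<le> w x) \<longrightarrow>
    \<bar>ap_avg N k f\<bar> - 2 ^ (k + 1) * (MIN j\<in>{0..k}. gowers_norm N k (f j)) \<le> B"
proof (intro exI allI impI)
  fix f assume f: "\<forall>j\<le>k. \<forall>x\<in>ZN N. \<bar>f j x\<bar> \<le> w x"
  have "- (1 + gowers_avg N k w) \<le> gowers_norm N k (f j)" if "j \<le> k" for j
    using abs_gowers_norm_le[OF assms, of "f j" w k] f that by (simp add: abs_le_iff)
  then have "- (1 + gowers_avg N k w) \<le> (MIN j\<in>{0..k}. gowers_norm N k (f j))"
    by (simp add: Min_ge_iff)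
  then have "2 ^ (k + 1) * - (1 + gowers_avg N k w)
      \<le> 2 ^ (k + 1) * (MIN j\<in>{0..k}. gowers_norm N k (f j))"
    by (rule mult_left_mono) simp
  then have "- (2 ^ (k + 1) * (1 + gowers_avg N k w))
      \<le> 2 ^ (k + 1) * (MIN j\<in>{0..k}. gowers_norm N k (f j))"
    by (simp only: mult_minus_right)
  then show "\<bar>ap_avg N k f\<bar> - 2 ^ (k + 1) * (MIN j\<in>{0..k}. gowers_norm N k (f j))
      \<le> ap_avg N k (\<lambda>_. w) + 2 ^ (k + 1) * (1 + gowers_avg N k w)"
    using abs_ap_avg_le[OF assms f] by linarith
qed

theorem proposition3p3:
  fixes k :: nat
  assumes "k \<ge> 2"
  shows "\<exists>m0 t L q0. m0 > 0 \<and> t > 0 \<and> L > 0 \<and> q0 > 0 \<and>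
    (\<forall>nu. pseudo_random_weight m0 t L q0 nu \<longrightarrow>
      (\<exists>eps :: nat \<Rightarrow> real.
         (\<forall>N. eps N \<ge> 0) \<and>
         (\<forall>e>0. \<exists>N0. \<forall>N. prime N \<and> N \<ge> N0 \<longrightarrow> eps N < e) \<and>
         (\<forall>N (f :: nat \<Rightarrow> int \<Rightarrow> real). prime N \<longrightarrow>
            (\<forall>j\<le>k. \<forall>x\<in>ZN N. \<bar>f j x\<bar> \<le> 1 + nu N x) \<longrightarrow>
            \<bar>(\<Sum>x\<in>ZN N. \<Sum>s\<in>ZN N. \<Prod>j\<le>k. f j ((x + int j * s) mod int N))
               / real (card (ZN N \<times> ZN N))\<bar>
            \<le> 2 ^ (k + 1) * (MIN j\<in>{0..k}. gowers_norm N k (f j)) + eps N)))"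
proof (rule exI[of _ "gvn_m0 k"], rule exI[of _ "4 * k"], rule exI[of _ "gvn_L k"],
    rule exI[of _ "1::nat"], intro conjI allI impI)
  show "0 < gvn_m0 k" "0 < gvn_L k" "0 < 4 * k" "0 < (1::nat)"
    using assms by (simp_all add: gvn_m0_def gvn_L_def)
  fix \<nu> assume "pseudo_random_weight (gvn_m0 k) (4 * k) (gvn_L k) 1 \<nu>"
  then have lf: "linear_forms_condition (gvn_m0 k) (4 * k) (gvn_L k) \<nu>"
    and \<nu>: "\<And>N x. prime N \<Longrightarrow> x \<in> ZN N \<Longrightarrow> 0 \<le> \<nu> N x"
    unfolding pseudo_random_weight_def by auto
  have "\<exists>eps. (\<forall>N. eps N \<ge> 0) \<and> (\<forall>e>0. \<exists>N0. \<forall>N. prime N \<and> N \<ge> N0 \<longrightarrow> eps N < e)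
      \<and> (\<forall>N f. prime N \<longrightarrow> f \<in> {f. \<forall>j\<le>k. \<forall>x\<in>ZN N. \<bar>f j x\<bar> \<le> 1 + \<nu> N x} \<longrightarrow>
           \<bar>ap_avg N k f\<bar> \<le> 2 ^ (k + 1) * (MIN j\<in>{0..k}. gowers_norm N k (f j)) + eps N)"
  proof (rule vanishing_error_function)
    show "\<exists>B. \<forall>f\<in>{f. \<forall>j\<le>k. \<forall>x\<in>ZN N. \<bar>f j x\<bar> \<le> 1 + \<nu> N x}.
        \<bar>ap_avg N k f\<bar> - 2 ^ (k + 1) * (MIN j\<in>{0..k}. gowers_norm N k (f j)) \<le> B" if "prime N" for N
      using ap_avg_minus_gowers_bounded[of N] that prime_gt_0_nat by auto
  qed (rule ap_avg_bound_eventually[OF assms lf \<nu>])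
  then show "\<exists>eps. (\<forall>N. eps N \<ge> 0) \<and> (\<forall>e>0. \<exists>N0. \<forall>N. prime N \<and> N \<ge> N0 \<longrightarrow> eps N < e) \<and>
      (\<forall>N f. prime N \<longrightarrow> (\<forall>j\<le>k. \<forall>x\<in>ZN N. \<bar>f j x\<bar> \<le> 1 + \<nu> N x) \<longrightarrow>
         \<bar>(\<Sum>x\<in>ZN N. \<Sum>s\<in>ZN N. \<Prod>j\<le>k. f j ((x + int j * s) mod int N))
            / real (card (ZN N \<times> ZN N))\<bar>
           \<le> 2 ^ (k + 1) * (MIN j\<in>{0..k}. gowers_norm N k (f j)) + eps N)"
    unfolding ap_avg_def by simp
qed

end
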